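(* Let $n\in\mathbb N$, let $K_1,\dots,K_n$ be singular, strictly concave kernel functions satisfying (PM$_0$), and let $J$ be an $n$-field function satisfying either $J(0)=\lim_{t\downarrow0}J(t)=-\infty$ or $J(1)=\lim_{t\uparrow1}J(t)=-\infty$. Then for every $\mathbf y\in Y$ there is $\delta>0$ such that the Clarke derivative $D_{\mathrm{Clarke}}\Phi(\mathbf x)$ has full rank at every point $\mathbf x$ of $\{\mathbf x:\|\mathbf x-\mathbf y\|<\delta\}$. Consequently $\Phi:Y\to\mathbb R^n$ is a local homeomorphism which is locally bi-Lipschitz.
   Context: A kernel function is a function $K:(-1,0)\cup(0,1)\to\mathbb R$ that is concave on $(-1,0)$ and concave on $(0,1)$ and satisfies $\lim_{t\downarrow0}K(t)=\lim_{t\uparrow0}K(t)$. It is extended to $[-1,1]$ with values in $[-\infty,\infty)$ by its one-sided limits at $-1,0,1$. It is singular if $K(0)=-\infty$. Strictly concave means strictly concave on each of $(-1,0)$ and $(0,1)$. (PM$_0$) means $K'(t)-K'(t-1)\ge0$ for almost every $t\in(0,1)$. An $n$-field function is a function $J:[0,1]\to[-\infty,\infty)$ that is bounded above and whose set of finite values has total weight strictly greater than $n$. Here the points $0$ and $1$ each have weight $1/2$ and every point of $(0,1)$ has weight $1$. $S=\{\mathbf y\in\mathbb R^n:0<y_1<\dots<y_n<1\}$. $F(\mathbf y,t)=J(t)+\sum_iK_i(t-y_i)$. Set $y_0=0$ and $y_{n+1}=1$. Let $I_j(\mathbf y)=[y_j,y_{j+1}]$ and $m_j(\mathbf y)=\sup_{I_j(\mathbf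 y)}F(\mathbf y,\cdot)$. $Y=\{\mathbf y\in S:m_j(\mathbf y)\ne-\infty\ \forall j\}$. $\Phi(\mathbf y)=(m_1(\mathbf y)-m_0(\mathbf y),\dots,m_n(\mathbf y)-m_{n-1}(\mathbf y))$. $\Phi$ is locally Lipschitz on $Y$, hence differentiable almost everywhere. $\|\mathbf v\|=\max_i|v_i|$. For a locally Lipschitz $f:U\to\mathbb R^n$ on an open $U\subseteq\mathbb R^n$, the Clarke derivative $D_{\mathrm{Clarke}}f(\mathbf x_0)$ is the convex hull of the set of all matrices $A$ that are limit points of $(f'(\mathbf x_k))_k$ for some sequence $\mathbf x_k\to\mathbf x_0$ of points where $f$ is differentiable. It has full rank if every matrix in it has rank $n$. *)

theory Defs
  imports "HOL-Analysis.Analysis" "HOL-Library.Extended_Real"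
begin

definition strictly_concave_on :: "real set \<Rightarrow> (real \<Rightarrow> real) \<Rightarrow> bool" where
  "strictly_concave_on S f \<longleftrightarrow> convex S \<and>
     (\<forall>x\<in>S. \<forall>y\<in>S. \<forall>u. x \<noteq> y \<and> 0 < u \<and> u < 1 \<longrightarrow>
        u * f x + (1 - u) * f y < f (u * x + (1 - u) * y))"

(* A kernel function, represented by its extension K : [-1,1] -> [-\<infinity>,\<infinity>)
   (values outside [-1,1] are irrelevant). *)
definition kernel_function :: "(real \<Rightarrow> ereal) \<Rightarrow> bool" where
  "kernel_function K \<longleftrightarrow>
     (\<forall>t\<in>{-1<..<0} \<union> {0<..<1}. \<bar>K t\<bar> \<noteq> \<infinity>) \<and>
     concave_on {-1<..<0} (\<lambda>t. real_of_ereal (K t)) \<and>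
     concave_on {0<..<1} (\<lambda>t. real_of_ereal (K t)) \<and>
     (K \<longlongrightarrow> K 0) (at_right 0) \<and> (K \<longlongrightarrow> K 0) (at_left 0) \<and>
     (K \<longlongrightarrow> K (-1)) (at_right (-1)) \<and> (K \<longlongrightarrow> K 1) (at_left 1)"

definition singular_kernel :: "(real \<Rightarrow> ereal) \<Rightarrow> bool" where
  "singular_kernel K \<longleftrightarrow> K 0 = -\<infinity>"

definition strictly_concave_kernel :: "(real \<Rightarrow> ereal) \<Rightarrow> bool" where
  "strictly_concave_kernel K \<longleftrightarrow>
     strictly_concave_on {-1<..<0} (\<lambda>t. real_of_ereal (K t)) \<and>
     strictly_concave_on {0<..<1} (\<lambda>t. real_of_ereal (K t))"

definition PM0 :: "(real \<Rightarrow> ereal) \<Rightarrow> bool" where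
  "PM0 K \<longleftrightarrow> (AE t in lborel. t \<in> {0<..<1} \<longrightarrow>
      deriv (\<lambda>s. real_of_ereal (K s)) t - deriv (\<lambda>s. real_of_ereal (K s)) (t - 1) \<ge> 0)"

definition weight :: "real set \<Rightarrow> ereal" where
  "weight A = (if finite (A \<inter> {0<..<1})
      then ereal (real (card (A \<inter> {0<..<1})) + (if 0 \<in> A then 1/2 else 0) + (if 1 \<in> A then 1/2 else 0))
      else \<infinity>)"

definition n_field_function :: "nat \<Rightarrow> (real \<Rightarrow> ereal) \<Rightarrow> bool" where
  "n_field_function n J \<longleftrightarrow>
     (\<forall>t\<in>{0..1}. J t \<noteq> \<infinity>) \<and> (\<exists>M. \<forall>t\<in>{0..1}. J t \<le> ereal M) \<and>
     weight {t\<in>{0..1}. J t \<noteq> -\<infinity>} > ereal (real n)"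

(* Positions: the index type 'n (with n = CARD('n) elements) is listed in increasing order. *)
definition idx_pos :: "'n::{finite,linorder} \<Rightarrow> nat" where
  "idx_pos i = card {j. j < i}"   (* 0-based *)

definition idx_of :: "nat \<Rightarrow> 'n::{finite,linorder}" where
  "idx_of k = sorted_list_of_set (UNIV :: 'n set) ! (k - 1)"   (* k = 1..n *)

definition simplexS :: "(real^'n::{finite,linorder}) set" where
  "simplexS = {y. (\<forall>i. 0 < y$i \<and> y$i < 1) \<and> (\<forall>i j. i < j \<longrightarrow> y$i < y$j)}"

definition ypt :: "real^'n::{finite,linorder} \<Rightarrow> nat \<Rightarrow> real" where
  "ypt y k = (if k = 0 then 0 else if k \<ge> CARD('n) + 1 then 1 else y $ idx_of k)"

definition Ffun :: "(real \<Rightarrow> ereal) \<Rightarrow> ('n \<Rightarrow> real \<Rightarrow> ereal)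
                   \<Rightarrow> real^'n::{finite,linorder} \<Rightarrow> real \<Rightarrow> ereal" where
  "Ffun J K y t = J t + (\<Sum>i\<in>UNIV. K i (t - y $ i))"

definition mfun :: "(real \<Rightarrow> ereal) \<Rightarrow> ('n \<Rightarrow> real \<Rightarrow> ereal)
                   \<Rightarrow> nat \<Rightarrow> real^'n::{finite,linorder} \<Rightarrow> ereal" where
  "mfun J K j y = (SUP t\<in>{ypt y j .. ypt y (Suc j)}. Ffun J K y t)"

definition Yset :: "(real \<Rightarrow> ereal) \<Rightarrow> ('n \<Rightarrow> real \<Rightarrow> ereal) \<Rightarrow> (real^'n::{finite,linorder}) set" where
  "Yset J K = {y \<in> simplexS. \<forall>j \<le> CARD('n). mfun J K j y \<noteq> -\<infinity>}"

(* \<Phi>(y)_k = m_k(y) - m_{k-1}(y), k = 1..n; meaningful on Yset *)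
definition Phi :: "(real \<Rightarrow> ereal) \<Rightarrow> ('n \<Rightarrow> real \<Rightarrow> ereal) \<Rightarrow> real^'n::{finite,linorder} \<Rightarrow> real^'n::{finite,linorder}" where
  "Phi J K y = (\<chi> i. real_of_ereal (mfun J K (Suc (idx_pos i)) y) - real_of_ereal (mfun J K (idx_pos i) y))"

definition clarke_derivative :: "(real^'n) set \<Rightarrow> (real^'n \<Rightarrow> real^'m) \<Rightarrow> real^'n \<Rightarrow> (real^'n^'m) set" where
  "clarke_derivative U f x0 = convex hull
     {A. \<exists>xs r. (\<forall>k. xs k \<in> U \<and> f differentiable (at (xs k))) \<and> xs \<longlonglongrightarrow> x0 \<and>
              strict_mono r \<and> (\<lambda>k. matrix (frechet_derivative f (at (xs (r k))))) \<longlonglongrightarrow> A}"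

definition full_rank_set :: "(real^'n^'m) set \<Rightarrow> bool" where
  "full_rank_set D \<longleftrightarrow> (\<forall>A\<in>D. rank A = CARD('n))"

end

theory Submission
  imports Defs
begin

(*
  Near a point of Y, every point within 1 of a maximum m_j stays a uniform distance away from
  the singularities y_i and from the end of [0,1] where J = -infinity.  Comparing F at such a
  near-maximizer w_j for two nearby parameters a and b gives

    m_j(b) - m_j(a)  ~  sum_i (a_i - b_i) * T_i(w_j),

  where T_i(w) is the slope of the chord of K_i between w - a_i and w - b_i.  By concavity
  T_i(w_j) does not increase with j except where w_j passes y_i, while strict concavity and
  (PM_0) force a total increase of at least some eps > 0 from the first interval to the last.
  Summation by parts then shows that Phi has nonnegative off-diagonal difference quotients and
  column sums at most -eps.  Hence every Jacobian, and so every element of the Clarke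
  derivative, lies in the closed convex set of such matrices, all of which are invertible.
  The same estimate gives eps * |b - a|_1 <= |Phi b - Phi a|_1, so Phi is locally bi-Lipschitz,
  and invariance of domain makes it a local homeomorphism.
*)

section \<open>Chord slopes of concave functions\<close>

definition chord_slope :: "(real \<Rightarrow> real) \<Rightarrow> real \<Rightarrow> real \<Rightarrow> real" where
  "chord_slope f u v = (f u - f v) / (u - v)"

lemma chord_slope_commute: "chord_slope f u v = chord_slope f v u"
  unfolding chord_slope_def by (simp add: divide_simps) (simp add: algebra_simps)

lemma concave_on_chord_slope_three:
  assumes c: "concave_on I f" and I: "x \<in> I" "y \<in> I" and t: "x < t" "t < y"
  shows "chord_slope f x t \<ge> chord_slope f x y" "chord_slope f x y \<ge> chord_slope f t y"
proof -
  have cv: "convex_on I (\<lambda>x. - f x)" using c by (simp add: concave_on_def)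
  from convex_on_slope_le[OF cv I t]
  have a: "(- f x - - f t) / (x - t) \<le> (- f x - - f y) / (x - y)"
   and b: "(- f x - - f y) / (x - y) \<le> (- f t - - f y) / (t - y)" by auto
  have e1: "(- f x - - f t) / (x - t) = - chord_slope f x t" by (simp add: chord_slope_def divide_simps)
  have e2: "(- f x - - f y) / (x - y) = - chord_slope f x y" by (simp add: chord_slope_def divide_simps)
  have e3: "(- f t - - f y) / (t - y) = - chord_slope f t y" by (simp add: chord_slope_def divide_simps)
  show "chord_slope f x t \<ge> chord_slope f x y" "chord_slope f x y \<ge> chord_slope f t y" using a b e1 e2 e3 by linarith+
qed

lemma concave_on_chord_slope_antimono:
  assumes c: "concave_on I f" and I: "x \<in> I" "y' \<in> I"
    and xy: "x < y" "x' < y'" "x \<le> x'" "y \<le> y'"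
  shows "chord_slope f x y \<ge> chord_slope f x' y'"
proof -
  have cI: "convex I" using c concave_on_imp_convex by blast
  have yI: "y \<in> I" using I xy cI
    by (meson atMostAtLeast_subset_convex atLeastAtMost_iff less_le_trans order.strict_implies_order subsetD)
  have x'I: "x' \<in> I" using I xy cI
    by (meson atMostAtLeast_subset_convex atLeastAtMost_iff less_le_trans order.strict_implies_order subsetD)
  have s1: "chord_slope f x y \<ge> chord_slope f x' y" if "x' < y"
  proof (cases "x = x'")
    case False then have "x < x'" using xy by simp
    from concave_on_chord_slope_three[OF c I(1) yI this that] chord_slope_commute show ?thesis by (metis order_trans)
  qed simp
  have s2: "chord_slope f x' y \<ge> chord_slope f x' y'" if "x' < y"
  proof (cases "y = y'")
    case False then have "y < y'" using xy by simp
    from concave_on_chord_slope_three[OF c x'I I(2) that this] show ?thesis by (metis order_trans)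
  qed simp
  show ?thesis
  proof (cases "x' < y")
    case True then show ?thesis using s1 s2 by linarith
  next
    case False
    have a: "chord_slope f x y \<ge> chord_slope f y y'"
      using concave_on_chord_slope_three[OF c I(1) I(2)] xy False by (metis less_le_trans not_less order.trans chord_slope_commute)
    show ?thesis
    proof (cases "y = x'")
      case True then show ?thesis using a by simp
    next
      case False2: False
      have "y < x'" using False False2 by simp
      have "chord_slope f y y' \<ge> chord_slope f x' y'" using concave_on_chord_slope_three[OF c yI I(2) \<open>y < x'\<close> xy(2)]
        by linarith
      then show ?thesis using a by linarith
    qed
  qed
qed

lemma concave_on_chord_slope_deriv:
  assumes c: "concave_on {a<..<b} f" and cI: "c \<in> {a<..<b}" and xI: "x \<in> {a<..<b}"
    and d: "(f has_real_derivative D) (at c)"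
  shows "x < c \<Longrightarrow> chord_slope f x c \<ge> D" "c < x \<Longrightarrow> chord_slope f c x \<le> D"
proof -
  have cv: "convex_on {a<..<b} (\<lambda>x. - f x)" using c by (simp add: concave_on_def)
  have d': "((\<lambda>x. - f x) has_field_derivative - D) (at c within {a<..<b})"
    using d by (auto intro: derivative_eq_intros has_field_derivative_at_within)
  have "- f x - - f c \<ge> - D * (x - c)"
    by (rule convex_on_imp_above_tangent[OF cv _ _ xI d']) (use cI in auto)
  then have h: "f x - f c \<le> D * (x - c)" by simp
  show "x < c \<Longrightarrow> chord_slope f x c \<ge> D" using h unfolding chord_slope_def by (simp add: divide_simps algebra_simps)
  show "c < x \<Longrightarrow> chord_slope f c x \<le> D" using h unfolding chord_slope_def by (simp add: divide_simps algebra_simps)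
qed

lemma concave_on_continuous_on:
  fixes f :: "real \<Rightarrow> real"
  assumes "concave_on {a<..<b} f" shows "continuous_on {a<..<b} f"
proof -
  have "convex_on {a<..<b} (\<lambda>x. - f x)" using assms by (simp add: concave_on_def)
  then have "continuous_on {a<..<b} (\<lambda>x. - f x)"
    using convex_on_continuous[of "{a<..<b}" "\<lambda>x. - f x"] by auto
  from continuous_on_minus[OF this] show ?thesis by simp
qed

lemma concave_on_bdd_above:
  fixes f :: "real \<Rightarrow> real"
  assumes c: "concave_on {a<..<b} f" and ab: "a < b"
  shows "\<exists>M. \<forall>s\<in>{a<..<b}. f s \<le> M"
proof -
  define c1 where "c1 = a + (b - a)/4"
  define c2 where "c2 = a + (b - a)/2"
  define c3 where "c3 = a + 3*(b - a)/4"
  have cs: "a < c1" "c1 < c2" "c2 < c3" "c3 < b" using ab unfolding c1_def c2_def c3_def by (simp_all add: field_simps)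
  show ?thesis
  proof (intro exI ballI)
    fix s assume s: "s \<in> {a<..<b}"
    consider "s = c2" | "c2 < s" | "s < c2" by linarith
    then show "f s \<le> \<bar>f c2\<bar> + (b - a) * \<bar>chord_slope f c1 c2\<bar> + (b - a) * \<bar>chord_slope f c2 c3\<bar>"
    proof cases
      case 1 then show ?thesis using ab by (smt (verit) abs_ge_self mult_nonneg_nonneg abs_ge_zero)
    next
      case 2
      have "chord_slope f c2 s \<le> chord_slope f c1 c2" using concave_on_chord_slope_antimono[OF c, of c1 s c2 c2] cs s 2 by auto
      moreover have "f s - f c2 = (s - c2) * chord_slope f c2 s" unfolding chord_slope_def using 2 by (simp add: divide_simps algebra_simps)
      ultimately have "f s - f c2 \<le> (s - c2) * chord_slope f c1 c2" using 2 by (simp add: mult_left_mono)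
      also have "\<dots> \<le> (s - c2) * \<bar>chord_slope f c1 c2\<bar>" using 2 by (intro mult_left_mono) auto
      also have "\<dots> \<le> (b - a) * \<bar>chord_slope f c1 c2\<bar>" using 2 s cs by (intro mult_right_mono) auto
      finally show ?thesis using ab by (smt (verit) abs_ge_self mult_nonneg_nonneg abs_ge_zero)
    next
      case 3
      have "chord_slope f s c2 \<ge> chord_slope f c2 c3" using concave_on_chord_slope_antimono[OF c, of s c3 c2 c2] cs s 3 by auto
      moreover have "f c2 - f s = (c2 - s) * chord_slope f s c2" unfolding chord_slope_def using 3 by (simp add: divide_simps algebra_simps)
      ultimately have "f c2 - f s \<ge> (c2 - s) * chord_slope f c2 c3" using 3 by (simp add: mult_left_mono)
      moreover have "(c2 - s) * chord_slope f c2 c3 \<ge> - ((c2 - s) * \<bar>chord_slope f c2 c3\<bar>)" using 3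
        by (smt (verit) abs_ge_minus_self mult_left_mono mult_minus_right)
      moreover have "(c2 - s) * \<bar>chord_slope f c2 c3\<bar> \<le> (b - a) * \<bar>chord_slope f c2 c3\<bar>" using 3 s cs
        by (intro mult_right_mono) auto
      ultimately show ?thesis using ab by (smt (verit) abs_ge_self mult_nonneg_nonneg abs_ge_zero)
    qed
  qed
qed

lemma concave_on_chord_slope_shift_antimono:
  assumes c: "concave_on {a<..<b} f" and pq: "p \<le> q" and h: "h \<noteq> 0"
    and I: "p \<in> {a<..<b}" "p + h \<in> {a<..<b}" "q \<in> {a<..<b}" "q + h \<in> {a<..<b}"
  shows "chord_slope f p (p + h) \<ge> chord_slope f q (q + h)"
proof (cases "h > 0")
  case True
  then show ?thesis using concave_on_chord_slope_antimono[OF c, of p "q + h" "p + h" q] I pq by auto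
next
  case False
  then have "h < 0" using h by simp
  then have "chord_slope f (p + h) p \<ge> chord_slope f (q + h) q"
    using concave_on_chord_slope_antimono[OF c, of "p + h" q p "q + h"] I pq by auto
  then show ?thesis by (simp add: chord_slope_commute)
qed

lemma strictly_concave_on_chord_slope_less:
  assumes sc: "strictly_concave_on I f" and I: "x \<in> I" "y \<in> I" and t: "x < t" "t < y"
  shows "chord_slope f x t > chord_slope f t y"
proof -
  define u where "u = (y - t) / (y - x)"
  have u: "0 < u" "u < 1" using t unfolding u_def by (auto simp: field_simps)
  have u1: "u * (y - x) = y - t" using t unfolding u_def by simp
  have "u * x + (1 - u) * y = y - u * (y - x)" by (simp add: algebra_simps)
  then have ut: "u * x + (1 - u) * y = t" using u1 by simp
  have "u * f x + (1 - u) * f y < f (u * x + (1 - u) * y)"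
    using sc I u t unfolding strictly_concave_on_def by auto
  then have *: "u * f x + (1 - u) * f y < f t" using ut by simp
  have u2: "(1 - u) * (y - x) = t - x" using u1 by (simp add: algebra_simps)
  have "(y - x) * (u * f x + (1 - u) * f y) < (y - x) * f t"
    using * t by (intro mult_strict_left_mono) auto
  moreover have "(y - x) * (u * f x + (1 - u) * f y) = (u * (y - x)) * f x + ((1 - u) * (y - x)) * f y"
    by (simp add: algebra_simps)
  ultimately have "(y - t) * f x + (t - x) * f y < (y - x) * f t" using u1 u2 by simp
  then have "(f t - f x) * (y - t) > (f y - f t) * (t - x)" by (simp add: algebra_simps)
  then show ?thesis using t unfolding chord_slope_def by (simp add: divide_simps) (simp add: algebra_simps)
qed

lemma strictly_concave_on_chord_slope_gap:
  fixes f :: "real \<Rightarrow> real"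
  assumes c: "concave_on {a<..<b} f" and sc: "strictly_concave_on {a<..<b} f"
    and ab: "a < \<alpha>" "\<beta> < b" and nu: "\<nu> > 0"
  shows "\<exists>\<epsilon>>0. \<forall>r p h. \<alpha> \<le> r \<longrightarrow> \<alpha> \<le> r + h \<longrightarrow> r + \<nu> \<le> p \<longrightarrow> p \<le> \<beta> \<longrightarrow> p + h \<le> \<beta> \<longrightarrow>
           h \<noteq> 0 \<longrightarrow> \<bar>h\<bar> \<le> \<nu>/3 \<longrightarrow> chord_slope f r (r + h) \<ge> chord_slope f p (p + h) + \<epsilon>"
proof (cases "\<alpha> \<le> \<beta> - \<nu>")
  case False
  show ?thesis by (rule exI[of _ 1]) (use False in auto)
next
  case True
  define \<phi> where "\<phi> r = chord_slope f (r + \<nu>/3) (r + 2*\<nu>/3) - chord_slope f (r + 2*\<nu>/3) (r + \<nu>)" for r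
  have cf: "continuous_on {a<..<b} f" by (rule concave_on_continuous_on[OF c])
  have cphi: "continuous_on {\<alpha>..\<beta> - \<nu>} \<phi>"
  proof -
    have sub: "(\<lambda>r. r + d) ` {\<alpha>..\<beta> - \<nu>} \<subseteq> {a<..<b}" if "0 \<le> d" "d \<le> \<nu>" for d
      using that ab by auto
    have cc: "continuous_on {\<alpha>..\<beta> - \<nu>} (\<lambda>r. f (r + d))" if "0 \<le> d" "d \<le> \<nu>" for d
    proof -
      have "continuous_on ((\<lambda>r. r + d) ` {\<alpha>..\<beta> - \<nu>}) f" by (rule continuous_on_subset[OF cf sub[OF that]])
      moreover have "continuous_on {\<alpha>..\<beta> - \<nu>} (\<lambda>r. r + d)" by (intro continuous_intros)
      ultimately show ?thesis using continuous_on_compose[of "{\<alpha>..\<beta> - \<nu>}" "\<lambda>r. r + d" f] by (simp add: o_def)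
    qed
    have e: "\<phi> = (\<lambda>r. (f (r + \<nu>/3) - f (r + 2*\<nu>/3)) / (- \<nu>/3) - (f (r + 2*\<nu>/3) - f (r + \<nu>)) / (- \<nu>/3))"
      unfolding \<phi>_def chord_slope_def by (rule ext) (simp add: field_simps)
    show ?thesis unfolding e using nu
      by (intro continuous_intros cc) auto
  qed
  obtain r0 where r0: "r0 \<in> {\<alpha>..\<beta> - \<nu>}" "\<And>r. r \<in> {\<alpha>..\<beta> - \<nu>} \<Longrightarrow> \<phi> r0 \<le> \<phi> r"
    using continuous_attains_inf[OF compact_Icc _ cphi] True by auto
  have pos: "\<phi> r0 > 0"
    using strictly_concave_on_chord_slope_less[OF sc, of "r0 + \<nu>/3" "r0 + \<nu>" "r0 + 2*\<nu>/3"] r0 ab nu unfolding \<phi>_def by auto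
  show ?thesis
  proof (intro exI[of _ "\<phi> r0"] conjI allI impI pos)
    fix r p h assume h: "\<alpha> \<le> r" "\<alpha> \<le> r + h" "r + \<nu> \<le> p" "p \<le> \<beta>" "p + h \<le> \<beta>" "h \<noteq> 0" "\<bar>h\<bar> \<le> \<nu>/3"
    have rI: "r \<in> {\<alpha>..\<beta> - \<nu>}" using h by auto
    have A: "chord_slope f r (r + h) \<ge> chord_slope f (r + \<nu>/3) (r + 2*\<nu>/3)"
    proof (cases "h > 0")
      case True then show ?thesis
        using concave_on_chord_slope_antimono[OF c, of r "r + 2*\<nu>/3" "r + h" "r + \<nu>/3"] h ab nu by auto
    next
      case False
      then have "h < 0" using h by auto
      then have "chord_slope f (r + h) r \<ge> chord_slope f (r + \<nu>/3) (r + 2*\<nu>/3)"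
        using concave_on_chord_slope_antimono[OF c, of "r + h" "r + 2*\<nu>/3" r "r + \<nu>/3"] h ab nu by auto
      then show ?thesis by (simp add: chord_slope_commute)
    qed
    have B: "chord_slope f p (p + h) \<le> chord_slope f (r + 2*\<nu>/3) (r + \<nu>)"
    proof (cases "h > 0")
      case True then show ?thesis
        using concave_on_chord_slope_antimono[OF c, of "r + 2*\<nu>/3" "p + h" "r + \<nu>" p] h ab nu by auto
    next
      case False
      then have "h < 0" using h by auto
      then have "chord_slope f (p + h) p \<le> chord_slope f (r + 2*\<nu>/3) (r + \<nu>)"
        using concave_on_chord_slope_antimono[OF c, of "r + 2*\<nu>/3" p "r + \<nu>" "p + h"] h ab nu by auto
      then show ?thesis by (simp add: chord_slope_commute)
    qed
    have "\<phi> r0 \<le> \<phi> r" using r0(2)[OF rI] .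
    then show "chord_slope f r (r + h) \<ge> chord_slope f p (p + h) + \<phi> r0" using A B unfolding \<phi>_def by linarith
  qed
qed

lemma concave_on_chord_slope_bounded:
  fixes f :: "real \<Rightarrow> real"
  assumes c: "concave_on {a<..<b} f" and ab: "a < \<alpha>" "\<beta> < b"
  shows "\<exists>M. \<forall>u v. \<alpha> \<le> u \<longrightarrow> u \<le> \<beta> \<longrightarrow> \<alpha> \<le> v \<longrightarrow> v \<le> \<beta> \<longrightarrow> \<bar>chord_slope f u v\<bar> \<le> M"
proof -
  define \<alpha>' where "\<alpha>' = (a + \<alpha>) / 2"
  define \<beta>' where "\<beta>' = (\<beta> + b) / 2"
  have lt: "a < \<alpha>'" "\<alpha>' < \<alpha>" "\<beta> < \<beta>'" "\<beta>' < b" using ab unfolding \<alpha>'_def \<beta>'_def by auto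
  have main: "chord_slope f \<beta> \<beta>' \<le> chord_slope f u v \<and> chord_slope f u v \<le> chord_slope f \<alpha>' \<alpha>" if "\<alpha> \<le> u" "u < v" "v \<le> \<beta>" for u v
    using concave_on_chord_slope_antimono[OF c, of \<alpha>' v \<alpha> u] concave_on_chord_slope_antimono[OF c, of u \<beta>' v \<beta>] that lt
      by auto
  show ?thesis
  proof (intro exI[of _ "\<bar>chord_slope f \<beta> \<beta>'\<bar> + \<bar>chord_slope f \<alpha>' \<alpha>\<bar>"] allI impI)
    fix u v assume uv: "\<alpha> \<le> u" "u \<le> \<beta>" "\<alpha> \<le> v" "v \<le> \<beta>"
    consider "u < v" | "u = v" | "v < u" by linarith
    then show "\<bar>chord_slope f u v\<bar> \<le> \<bar>chord_slope f \<beta> \<beta>'\<bar> + \<bar>chord_slope f \<alpha>' \<alpha>\<bar>"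
    proof cases
      case 1 then show ?thesis using main[of u v] uv by auto
    next
      case 2 then show ?thesis by (simp add: chord_slope_def)
    next
      case 3 then show ?thesis using main[of v u] uv by (auto simp: chord_slope_commute)
    qed
  qed
qed

definition right_slope :: "(real \<Rightarrow> real) \<Rightarrow> real \<Rightarrow> real \<Rightarrow> real" where
  "right_slope f b x = (SUP z\<in>{x<..<b}. chord_slope f x z)"

definition left_slope :: "(real \<Rightarrow> real) \<Rightarrow> real \<Rightarrow> real \<Rightarrow> real" where
  "left_slope f a x = (INF w\<in>{a<..<x}. chord_slope f w x)"

context
  fixes f :: "real \<Rightarrow> real" and a b :: real
  assumes conc: "concave_on {a<..<b} f"
begin

lemma chord_slope_right_le_left:
  assumes "a < w" "w < x" "x < z" "z < b"
  shows "chord_slope f x z \<le> chord_slope f w x"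
  using concave_on_chord_slope_three[OF conc, of w z x] assms by (auto simp: chord_slope_commute)

lemma bdd_above_right_chord_slopes: assumes "a < x" "x < b" shows "bdd_above ((\<lambda>z. chord_slope f x z) ` {x<..<b})"
proof -
  obtain w where "a < w" "w < x" using assms dense by blast
  then show ?thesis using chord_slope_right_le_left assms by (intro bdd_aboveI[of _ "chord_slope f w x"]) auto
qed

lemma bdd_below_left_chord_slopes: assumes "a < x" "x < b" shows "bdd_below ((\<lambda>w. chord_slope f w x) ` {a<..<x})"
proof -
  obtain z where "x < z" "z < b" using assms dense by blast
  then show ?thesis using chord_slope_right_le_left assms by (intro bdd_belowI[of _ "chord_slope f x z"]) auto
qed

lemma chord_slope_le_right_slope: assumes "a < x" "x < z" "z < b" shows "chord_slope f x z \<le> right_slope f b x"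
  unfolding right_slope_def using bdd_above_right_chord_slopes assms by (intro cSUP_upper) auto

lemma left_slope_le_chord_slope: assumes "a < w" "w < x" "x < b" shows "left_slope f a x \<le> chord_slope f w x"
  unfolding left_slope_def using bdd_below_left_chord_slopes assms by (intro cINF_lower) auto

lemma right_slope_le_chord_slope: assumes "a < w" "w < x" "x < b" shows "right_slope f b x \<le> chord_slope f w x"
  unfolding right_slope_def using assms chord_slope_right_le_left by (intro cSUP_least) auto

lemma right_slope_le_left_slope: assumes "a < x" "x < b" shows "right_slope f b x \<le> left_slope f a x"
proof -
  have "right_slope f b x \<le> chord_slope f w x" if "w \<in> {a<..<x}" for w using right_slope_le_chord_slope that assms by auto
  then show ?thesis unfolding left_slope_def using assms by (intro cINF_greatest) auto
qed

lemma right_slope_approx: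
  assumes "a < x" "x < b" "e > 0"
  shows "\<exists>z>x. z < b \<and> (\<forall>z'. x < z' \<and> z' \<le> z \<longrightarrow> chord_slope f x z' \<ge> right_slope f b x - e)"
proof -
  have ne: "{x<..<b} \<noteq> {}" using assms by auto
  obtain z where z: "z \<in> {x<..<b}" "chord_slope f x z > right_slope f b x - e"
    using less_cSUP_iff[OF ne bdd_above_right_chord_slopes[OF assms(1,2)], of "right_slope f b x - e"] assms(3)
    unfolding right_slope_def by auto
  show ?thesis
  proof (intro exI conjI allI impI)
    fix z' assume "x < z' \<and> z' \<le> z"
    then have "chord_slope f x z' \<ge> chord_slope f x z"
      using concave_on_chord_slope_antimono[OF conc, of x z z' x] z assms by auto
    then show "chord_slope f x z' \<ge> right_slope f b x - e" using z by linarith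
  qed (use z in auto)
qed

lemma left_slope_approx:
  assumes "a < x" "x < b" "e > 0"
  shows "\<exists>w<x. a < w \<and> (\<forall>w'. w \<le> w' \<and> w' < x \<longrightarrow> chord_slope f w' x \<le> left_slope f a x + e)"
proof -
  have ne: "{a<..<x} \<noteq> {}" using assms by auto
  obtain w where w: "w \<in> {a<..<x}" "chord_slope f w x < left_slope f a x + e"
    using cINF_less_iff[OF ne bdd_below_left_chord_slopes[OF assms(1,2)], of "left_slope f a x + e"] assms(3)
    unfolding left_slope_def by auto
  show ?thesis
  proof (intro exI conjI allI impI)
    fix w' assume "w \<le> w' \<and> w' < x"
    then have "chord_slope f w' x \<le> chord_slope f w x"
      using concave_on_chord_slope_antimono[OF conc, of w x x w'] w assms by auto
    then show "chord_slope f w' x \<le> left_slope f a x + e" using w by linarith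
  qed (use w in auto)
qed

lemma has_real_derivative_if_slopes_eq:
  assumes x: "a < x" "x < b" and eq: "right_slope f b x = left_slope f a x"
  shows "(f has_real_derivative right_slope f b x) (at x)"
  unfolding DERIV_def
proof (subst filterlim_at_split, intro conjI)
  let ?D = "right_slope f b x"
  show "((\<lambda>h. (f (x + h) - f x) / h) \<longlongrightarrow> ?D) (at_right 0)"
  proof (rule tendstoI)
    fix e :: real assume e: "e > 0"
    obtain z where z: "z > x" "z < b" "\<And>z'. x < z' \<Longrightarrow> z' \<le> z \<Longrightarrow> chord_slope f x z' \<ge> ?D - e/2"
      using right_slope_approx[OF x, of "e/2"] e by auto
    show "\<forall>\<^sub>F h in at_right 0. dist ((f (x + h) - f x) / h) ?D < e"
      unfolding eventually_at_right_field
    proof (intro exI[of _ "z - x"] conjI allI impI)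
      fix h :: real assume h: "0 < h" "h < z - x"
      have q: "(f (x + h) - f x) / h = chord_slope f x (x + h)" unfolding chord_slope_def
        by (simp add: divide_simps algebra_simps)
      have "chord_slope f x (x+h) \<le> ?D" using chord_slope_le_right_slope[of x "x+h"] x z h by auto
      moreover have "chord_slope f x (x+h) \<ge> ?D - e/2" using z(3)[of "x+h"] h by auto
      ultimately show "dist ((f (x + h) - f x) / h) ?D < e" using q e by (simp add: dist_real_def abs_if)
    qed (use z in auto)
  qed
  show "((\<lambda>h. (f (x + h) - f x) / h) \<longlongrightarrow> ?D) (at_left 0)"
  proof (rule tendstoI)
    fix e :: real assume e: "e > 0"
    obtain w where w: "w < x" "a < w" "\<And>w'. w \<le> w' \<Longrightarrow> w' < x \<Longrightarrow> chord_slope f w' x \<le> left_slope f a x + e/2"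
      using left_slope_approx[OF x, of "e/2"] e by auto
    show "\<forall>\<^sub>F h in at_left 0. dist ((f (x + h) - f x) / h) ?D < e"
      unfolding eventually_at_left_field
    proof (intro exI[of _ "w - x"] conjI allI impI)
      fix h :: real assume h: "w - x < h" "h < 0"
      have q: "(f (x + h) - f x) / h = chord_slope f (x + h) x" unfolding chord_slope_def
        by (simp add: divide_simps algebra_simps)
      have "chord_slope f (x+h) x \<ge> left_slope f a x" using left_slope_le_chord_slope[of "x+h" x] x w h by auto
      moreover have "chord_slope f (x+h) x \<le> left_slope f a x + e/2" using w(3)[of "x+h"] h by auto
      ultimately show "dist ((f (x + h) - f x) / h) ?D < e" using q e eq by (simp add: dist_real_def abs_if)
    qed (use w in auto)
  qed
qed

lemma countable_nondifferentiable:
  "countable {x \<in> {a<..<b}. \<not> f differentiable (at x)}"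
proof -
  let ?S = "{x \<in> {a<..<b}. \<not> f differentiable (at x)}"
  have lt: "right_slope f b x < left_slope f a x" if "x \<in> ?S" for x
  proof -
    have "right_slope f b x \<le> left_slope f a x" using right_slope_le_left_slope that by auto
    moreover have "right_slope f b x \<noteq> left_slope f a x"
    proof
      assume "right_slope f b x = left_slope f a x"
      then have "(f has_real_derivative right_slope f b x) (at x)" using has_real_derivative_if_slopes_eq that by auto
      then show False using that real_differentiable_def by blast
    qed
    ultimately show ?thesis by simp
  qed
  define r where "r x = (SOME q. q \<in> \<rat> \<and> right_slope f b x < q \<and> q < left_slope f a x)" for x
  have r: "r x \<in> \<rat> \<and> right_slope f b x < r x \<and> r x < left_slope f a x" if "x \<in> ?S" for x
    unfolding r_def by (rule someI_ex) (use Rats_dense_in_real lt[OF that] in blast)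
  have "inj_on r ?S"
  proof (rule inj_onI)
    fix x y assume xS: "x \<in> ?S" and yS: "y \<in> ?S" and eq: "r x = r y"
    show "x = y"
    proof (rule ccontr)
      assume "x \<noteq> y"
      then consider "x < y" | "y < x" by linarith
      then show False
      proof cases
        case 1
        have "left_slope f a y \<le> chord_slope f x y" using left_slope_le_chord_slope[of x y] xS yS 1 by auto
        also have "\<dots> \<le> right_slope f b x" using chord_slope_le_right_slope[of x y] xS yS 1 by auto
        finally show False using r[OF xS] r[OF yS] eq by linarith
      next
        case 2
        have "left_slope f a x \<le> chord_slope f y x" using left_slope_le_chord_slope[of y x] xS yS 2 by auto
        also have "\<dots> \<le> right_slope f b y" using chord_slope_le_right_slope[of y x] xS yS 2 by auto
        finally show False using r[OF xS] r[OF yS] eq by linarith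
      qed
    qed
  qed
  moreover have "countable (r ` ?S)"
    by (rule countable_subset[OF _ countable_rat]) (use r in auto)
  ultimately show ?thesis using countable_image_inj_on by blast
qed

end

section \<open>Consequences of \<open>(PM\<^sub>0)\<close>\<close>

context
  fixes k :: "real \<Rightarrow> real"
  assumes cn: "concave_on {-1<..<0} k" and cp: "concave_on {0<..<1} k"
    and pm: "AE t in lborel. t \<in> {0<..<1} \<longrightarrow> deriv k t - deriv k (t - 1) \<ge> 0"
begin

lemma PM0_good_point:
  assumes "0 \<le> \<alpha>" "\<alpha> < \<beta>" "\<beta> \<le> 1"
  shows "\<exists>t\<in>{\<alpha><..<\<beta>}. (k has_real_derivative deriv k t) (at t) \<and>
             (k has_real_derivative deriv k (t - 1)) (at (t - 1)) \<and> deriv k t \<ge> deriv k (t - 1)"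
proof (rule ccontr)
  assume nex: "\<not> ?thesis"
  define C1 where "C1 = {x \<in> {0<..<1}. \<not> k differentiable (at x)}"
  define C2 where "C2 = (\<lambda>x. x + 1) ` {x \<in> {-1<..<0}. \<not> k differentiable (at x)}"
  have c1: "countable C1" unfolding C1_def by (rule countable_nondifferentiable[OF cp])
  have c2: "countable C2" unfolding C2_def by (rule countable_image, rule countable_nondifferentiable[OF cn])
  from pm obtain N where N: "{t \<in> space lborel. \<not> (t \<in> {0<..<1} \<longrightarrow> deriv k t - deriv k (t - 1) \<ge> 0)} \<subseteq> N"
    "N \<in> null_sets lborel" using pm unfolding eventually_ae_filter by blast
  have sub: "{\<alpha><..<\<beta>} \<subseteq> N \<union> C1 \<union> C2"
  proof
    fix t assume t: "t \<in> {\<alpha><..<\<beta>}"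
    show "t \<in> N \<union> C1 \<union> C2"
    proof (rule ccontr)
      assume nt: "t \<notin> N \<union> C1 \<union> C2"
      have t01: "t \<in> {0<..<1}" using t assms by auto
      have d1: "k differentiable (at t)" using nt t01 unfolding C1_def by auto
      have d2: "k differentiable (at (t - 1))"
      proof (rule ccontr)
        assume "\<not> k differentiable (at (t - 1))"
        then have "t - 1 \<in> {x \<in> {-1<..<0}. \<not> k differentiable (at x)}" using t01 by auto
        then have "t \<in> C2" unfolding C2_def by (auto intro: image_eqI[of _ _ "t - 1"])
        then show False using nt by auto
      qed
      have "deriv k t - deriv k (t - 1) \<ge> 0" using nt N(1) t01 by auto
      then show False using nex t d1 d2 by (auto simp: DERIV_deriv_iff_real_differentiable)
    qed
  qed
  have "N \<union> C1 \<union> C2 \<in> null_sets lborel"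
    using N(2) countable_imp_null_set_lborel[OF c1] countable_imp_null_set_lborel[OF c2] by auto
  then have "{\<alpha><..<\<beta>} \<in> null_sets lborel" using null_sets_subset[OF _ _ sub] by auto
  then have "emeasure lborel {\<alpha><..<\<beta>} = 0" by auto
  then show False using assms by simp
qed

lemma right_slope_shift_le:
  assumes t0: "0 < t0" "t0 < 1"
  shows "right_slope k 0 (t0 - 1) \<le> right_slope k 1 t0"
proof (rule field_le_epsilon)
  fix e :: real assume e: "e > 0"
  obtain z where z: "z > t0 - 1" "z < 0" "\<And>z'. t0 - 1 < z' \<Longrightarrow> z' \<le> z \<Longrightarrow> chord_slope k (t0 - 1) z' \<ge> right_slope k 0 (t0 - 1) - e/2"
    using right_slope_approx[OF cn, of "t0 - 1" "e/2"] t0 e by auto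
  have cont: "isCont (\<lambda>u. chord_slope k u z) (t0 - 1)"
  proof -
    have "isCont k (t0 - 1)"
      using concave_on_continuous_on[OF cn] t0 by (simp add: continuous_on_eq_continuous_at)
    then show ?thesis unfolding chord_slope_def using z by (intro continuous_intros) auto
  qed
  then obtain \<rho> where \<rho>: "\<rho> > 0" "\<And>u. dist u (t0 - 1) < \<rho> \<Longrightarrow> dist (chord_slope k u z) (chord_slope k (t0 - 1) z) < e/2"
    unfolding continuous_at_eps_delta using e by (metis half_gt_zero)
  define \<beta> where "\<beta> = min (t0 + \<rho>) (min (z + 1) 1)"
  have "t0 < \<beta>" "\<beta> \<le> 1" using \<rho> z t0 unfolding \<beta>_def by auto
  then obtain t where t: "t \<in> {t0<..<\<beta>}" and d1: "(k has_real_derivative deriv k t) (at t)"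
    and d2: "(k has_real_derivative deriv k (t - 1)) (at (t - 1))" and dd: "deriv k t \<ge> deriv k (t - 1)"
    using PM0_good_point[of t0 \<beta>] t0 by auto
  have tb: "t < t0 + \<rho>" "t < z + 1" "t < 1" using t unfolding \<beta>_def by auto
  have "chord_slope k t0 t \<le> right_slope k 1 t0" using chord_slope_le_right_slope[OF cp, of t0 t] t t0 tb by auto
  moreover have "chord_slope k t0 t \<ge> deriv k t" using concave_on_chord_slope_deriv(1)[OF cp _ _ d1, of t0] t t0 tb by auto
  moreover have "chord_slope k (t - 1) z \<le> deriv k (t - 1)"
    using concave_on_chord_slope_deriv(2)[OF cn _ _ d2, of z] t t0 tb z by auto
  moreover have "dist (chord_slope k (t - 1) z) (chord_slope k (t0 - 1) z) < e/2" using \<rho>(2)[of "t - 1"] t tb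
    by (auto simp: dist_real_def)
  then have "\<bar>chord_slope k (t - 1) z - chord_slope k (t0 - 1) z\<bar> < e/2" by (simp add: dist_real_def)
  then have "chord_slope k (t - 1) z > chord_slope k (t0 - 1) z - e/2"
    using abs_ge_minus_self[of "chord_slope k (t - 1) z - chord_slope k (t0 - 1) z"]
    by linarith
  moreover have "chord_slope k (t0 - 1) z \<ge> right_slope k 0 (t0 - 1) - e/2" using z by auto
  ultimately show "right_slope k 0 (t0 - 1) \<le> right_slope k 1 t0 + e" using dd by linarith
qed

lemma shift_difference_mono:
  assumes st: "0 < s" "s \<le> t" "t < 1"
  shows "k s - k (s - 1) \<le> k t - k (t - 1)"
proof (rule ccontr)
  assume "\<not> ?thesis"
  then have gt: "k s - k (s - 1) > k t - k (t - 1)" by simp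
  then have "s < t" using st by (cases "s = t") auto
  define g where "g x = k x - k (x - 1)" for x
  define lam where "lam = (g s - g t) / (2 * (t - s))"
  have lam: "lam > 0" using gt \<open>s < t\<close> unfolding lam_def g_def by auto
  define \<phi> where "\<phi> x = g x + lam * x" for x
  have "lam * (t - s) = (g s - g t) / 2" unfolding lam_def using \<open>s < t\<close> by (simp add: field_simps)
  then have "\<phi> t < \<phi> s" using gt unfolding \<phi>_def g_def by (simp add: algebra_simps)
  have "{s..t} \<subseteq> {0<..<1}" using st by auto
  then have contk1: "continuous_on {s..t} k" using continuous_on_subset[OF concave_on_continuous_on[OF cp]] by auto
  have contk2: "continuous_on {s..t} (\<lambda>x. k (x - 1))"
  proof -
    have "(\<lambda>x. x - 1) ` {s..t} \<subseteq> {-1<..<0}" using st by auto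
    then have "continuous_on ((\<lambda>x. x - 1) ` {s..t}) k" by (rule continuous_on_subset[OF concave_on_continuous_on[OF cn]])
    moreover have "continuous_on {s..t} (\<lambda>x. x - 1)" by (intro continuous_intros)
    ultimately show ?thesis using continuous_on_compose[of "{s..t}" "\<lambda>x. x - 1" k] by (simp add: o_def)
  qed
  have cphi: "continuous_on {s..t} \<phi>" unfolding \<phi>_def g_def using contk1 contk2 by (intro continuous_intros) auto
  define A where "A = {x \<in> {s..t}. \<phi> s \<le> \<phi> x}"
  have clA: "closed A" unfolding A_def by (rule continuous_on_closed_Collect_le) (use cphi in auto)
  have sA: "s \<in> A" unfolding A_def using \<open>s < t\<close> by auto
  have bA: "bdd_above A" unfolding A_def by (auto intro: bdd_aboveI[of _ t])
  define xs where "xs = Sup A"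
  have xsA: "xs \<in> A" unfolding xs_def using closed_contains_Sup[OF _ bA clA] sA by auto
  then have xs: "s \<le> xs" "xs \<le> t" "\<phi> s \<le> \<phi> xs" unfolding A_def by auto
  have "xs \<noteq> t" using xs \<open>\<phi> t < \<phi> s\<close> by auto
  then have xst: "xs < t" using xs by simp
  have notA: "\<phi> x < \<phi> xs" if "xs < x" "x \<le> t" for x
  proof -
    have "x \<notin> A"
    proof
      assume "x \<in> A" then have "x \<le> xs" unfolding xs_def using bA by (rule cSup_upper)
      then show False using that by simp
    qed
    then show ?thesis using that xs unfolding A_def by auto
  qed
  obtain z where z: "z > xs" "z < 1" "\<And>z'. xs < z' \<Longrightarrow> z' \<le> z \<Longrightarrow> chord_slope k xs z' \<ge> right_slope k 1 xs - lam/2"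
    using right_slope_approx[OF cp, of xs "lam/2"] xs st lam by auto
  define x where "x = min z t"
  have x: "xs < x" "x \<le> t" "x \<le> z" using z xst unfolding x_def by auto
  have s1: "chord_slope k xs x \<ge> right_slope k 1 xs - lam/2" using z(3) x by auto
  have s2: "chord_slope k (xs - 1) (x - 1) \<le> right_slope k 0 (xs - 1)"
    using chord_slope_le_right_slope[OF cn, of "xs - 1" "x - 1"] x xs st
    by auto
  have s3: "right_slope k 0 (xs - 1) \<le> right_slope k 1 xs" using right_slope_shift_le xs st by auto
  have eq: "g x - g xs = (x - xs) * (chord_slope k xs x - chord_slope k (xs - 1) (x - 1))"
    unfolding g_def chord_slope_def using x by (simp add: divide_simps) (simp add: algebra_simps)
  have "chord_slope k xs x - chord_slope k (xs - 1) (x - 1) \<ge> - lam/2" using s1 s2 s3 by linarith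
  then have "(x - xs) * (- lam/2) \<le> (x - xs) * (chord_slope k xs x - chord_slope k (xs - 1) (x - 1))"
    using x by (intro mult_left_mono) auto
  then have "g x - g xs \<ge> (x - xs) * (- lam/2)" using eq by simp
  moreover have "\<phi> x - \<phi> xs = (g x - g xs) + lam * (x - xs)" unfolding \<phi>_def by (simp add: algebra_simps)
  moreover have "(x - xs) * (- lam/2) = - (lam * (x - xs)) / 2" "(x - xs) * (lam/2) = lam * (x - xs) / 2" by (simp_all add: field_simps)
  ultimately have "\<phi> x - \<phi> xs \<ge> (x - xs) * (lam/2)" by linarith
  moreover have "(x - xs) * (lam/2) > 0" using x lam by simp
  ultimately show False using notA[OF x(1,2)] by linarith
qed

lemma chord_slope_shift_le:
  assumes "h \<noteq> 0" "0 < q" "0 < q + h" "q < 1" "q + h < 1"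
  shows "chord_slope k (q - 1) (q - 1 + h) \<le> chord_slope k q (q + h)"
proof (cases "h > 0")
  case True
  have "k q - k (q - 1) \<le> k (q + h) - k (q + h - 1)"
    by (rule shift_difference_mono) (use assms True in auto)
  then have "k (q - 1 + h) - k (q - 1) \<le> k (q + h) - k q" by (simp add: algebra_simps)
  then have "(k (q - 1 + h) - k (q - 1)) / h \<le> (k (q + h) - k q) / h"
    using True by (simp add: divide_right_mono)
  moreover have "chord_slope k (q - 1) (q - 1 + h) = (k (q - 1 + h) - k (q - 1)) / h"
    unfolding chord_slope_def using True by (simp add: divide_simps algebra_simps)
  moreover have "chord_slope k q (q + h) = (k (q + h) - k q) / h"
    unfolding chord_slope_def using True by (simp add: divide_simps algebra_simps)
  ultimately show ?thesis by simp
next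
  case False
  then have hn: "h < 0" using assms by simp
  have "k (q + h) - k (q + h - 1) \<le> k q - k (q - 1)"
    by (rule shift_difference_mono) (use assms hn in auto)
  then have "k (q - 1) - k (q - 1 + h) \<le> k q - k (q + h)" by (simp add: algebra_simps)
  then have "(k (q - 1) - k (q - 1 + h)) / (- h) \<le> (k q - k (q + h)) / (- h)"
    using hn by (intro divide_right_mono) auto
  moreover have "chord_slope k (q - 1) (q - 1 + h) = (k (q - 1) - k (q - 1 + h)) / (- h)"
    unfolding chord_slope_def using hn by (simp add: divide_simps algebra_simps)
  moreover have "chord_slope k q (q + h) = (k q - k (q + h)) / (- h)"
    unfolding chord_slope_def using hn by (simp add: divide_simps algebra_simps)
  ultimately show ?thesis by simp
qed

end

lemma PM0_chord_slope_gap: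
  fixes k :: "real \<Rightarrow> real"
  assumes cn: "concave_on {-1<..<0} k" and cp: "concave_on {0<..<1} k"
    and scn: "strictly_concave_on {-1<..<0} k"
    and pm: "AE t in lborel. t \<in> {0<..<1} \<longrightarrow> deriv k t - deriv k (t - 1) \<ge> 0"
    and mu: "0 < \<mu>" "\<mu> < 1"
  shows "\<exists>\<epsilon>>0. \<forall>p q h. h \<noteq> 0 \<longrightarrow> \<bar>h\<bar> \<le> \<mu>/4 \<longrightarrow> p \<le> -\<mu>/2 \<longrightarrow> p + h \<le> -\<mu>/2 \<longrightarrow>
      \<mu>/2 \<le> q \<longrightarrow> \<mu>/2 \<le> q + h \<longrightarrow> q < 1 \<longrightarrow> q + h < 1 \<longrightarrow> q - p \<le> 1 - \<mu> \<longrightarrow>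
      chord_slope k q (q + h) \<ge> chord_slope k p (p + h) + \<epsilon>"
proof -
  obtain \<epsilon> where \<epsilon>: "\<epsilon> > 0" and ug: "\<And>r p h. -1 + \<mu>/4 \<le> r \<Longrightarrow> -1 + \<mu>/4 \<le> r + h \<Longrightarrow> r + \<mu> \<le> p \<Longrightarrow>
      p \<le> -\<mu>/4 \<Longrightarrow> p + h \<le> -\<mu>/4 \<Longrightarrow> h \<noteq> 0 \<Longrightarrow> \<bar>h\<bar> \<le> \<mu>/3 \<Longrightarrow> chord_slope k r (r + h) \<ge> chord_slope k p (p + h) + \<epsilon>"
    using strictly_concave_on_chord_slope_gap[OF cn scn, of "-1 + \<mu>/4" "-\<mu>/4" \<mu>] mu by auto
  show ?thesis
  proof (intro exI[of _ \<epsilon>] conjI \<epsilon> allI impI)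
    fix p q h assume a: "h \<noteq> 0" "\<bar>h\<bar> \<le> \<mu>/4" "p \<le> -\<mu>/2" "p + h \<le> -\<mu>/2" "\<mu>/2 \<le> q" "\<mu>/2 \<le> q + h"
      "q < 1" "q + h < 1" "q - p \<le> 1 - \<mu>"
    have gap: "chord_slope k (q - 1) (q - 1 + h) \<ge> chord_slope k p (p + h) + \<epsilon>"
      by (rule ug) (use a mu in auto)
    have shift: "chord_slope k (q - 1) (q - 1 + h) \<le> chord_slope k q (q + h)"
      by (rule chord_slope_shift_le[OF cn cp pm]) (use a mu in auto)
    show "chord_slope k q (q + h) \<ge> chord_slope k p (p + h) + \<epsilon>" using gap shift by linarith
  qed
qed

lemma finite_common_pos_radius:
  assumes "finite A" "\<And>a. a \<in> A \<Longrightarrow> \<exists>d>0. P a d"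
    and mono: "\<And>a d d'. P a d \<Longrightarrow> 0 < d' \<Longrightarrow> d' \<le> d \<Longrightarrow> P a d'"
  shows "\<exists>d>0. \<forall>a\<in>A. P a (d::real)"
  using assms(1,2)
proof (induction A rule: finite_induct)
  case empty then show ?case by (intro exI[of _ 1]) auto
next
  case (insert x F)
  obtain d where d: "d > 0" "\<forall>a\<in>F. P a d" using insert by auto
  obtain d' where d': "d' > 0" "P x d'" using insert by auto
  show ?case
    by (rule exI[of _ "min d d'"]) (use d d' mono in \<open>auto simp: min_def\<close>)
qed

lemma sum_le_member_plus:
  fixes f :: "'a \<Rightarrow> real"
  assumes "finite A" "i0 \<in> A" "\<And>i. i \<in> A \<Longrightarrow> f i \<le> M" "M \<ge> 0"
  shows "sum f A \<le> f i0 + real (card A) * M"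
proof -
  have "sum f A = f i0 + sum f (A - {i0})" using assms by (simp add: sum.remove)
  also have "sum f (A - {i0}) \<le> real (card (A - {i0})) * M"
    using sum_mono[of "A - {i0}" f "\<lambda>_. M"] assms by auto
  also have "\<dots> \<le> real (card A) * M" using assms by (intro mult_right_mono) (auto simp: card_Diff_subset)
  finally show ?thesis by simp
qed

lemma sum_ereal_MInfty:
  fixes f :: "'a \<Rightarrow> ereal"
  assumes "finite A" "i0 \<in> A" "f i0 = -\<infinity>" "\<And>i. i \<in> A \<Longrightarrow> f i \<noteq> \<infinity>"
  shows "sum f A = -\<infinity>"
proof -
  have "sum f A = f i0 + sum f (A - {i0})" using assms by (simp add: sum.remove)
  moreover have "sum f (A - {i0}) \<noteq> \<infinity>" using assms by (simp add: sum_Pinfty)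
  ultimately show ?thesis using assms by simp
qed

lemma summation_by_parts:
  fixes c X :: "nat \<Rightarrow> real"
  shows "(\<Sum>m<n. c (Suc m) * (X (Suc m) - X m)) = (\<Sum>j\<le>n. (c j - c (Suc j)) * X j) - c 0 * X 0 + c (Suc n) * X n"
proof (induction n)
  case 0 then show ?case by (simp add: algebra_simps)
next
  case (Suc n)
  show ?case using Suc by (simp add: algebra_simps)
qed

lemma sum_weighted_ge:
  fixes coef d :: "nat \<Rightarrow> real"
  assumes p: "p < n" and A: "coef p = A" and cb: "\<And>m. m < n \<Longrightarrow> \<bar>coef m\<bar> \<le> A"
    and dn: "\<And>m. m < n \<Longrightarrow> m \<noteq> p \<Longrightarrow> d m \<le> 0"
  shows "(\<Sum>m<n. coef m * d m) \<ge> A * (\<Sum>m<n. d m)"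
proof -
  have "(\<Sum>m<n. (coef m - A) * d m) \<ge> 0"
  proof (rule sum_nonneg)
    fix m assume "m \<in> {..<n}"
    then have m: "m < n" by simp
    show "(coef m - A) * d m \<ge> 0"
    proof (cases "m = p")
      case True then show ?thesis using A by simp
    next
      case False
      have "coef m - A \<le> 0" using cb[OF m] by (simp add: abs_le_iff)
      moreover have "d m \<le> 0" using dn[OF m False] .
      ultimately show ?thesis by (simp add: mult_nonpos_nonpos)
    qed
  qed
  moreover have "(\<Sum>m<n. (coef m - A) * d m) = (\<Sum>m<n. coef m * d m) - A * (\<Sum>m<n. d m)"
    by (simp add: algebra_simps sum_subtractf sum_distrib_left)
  ultimately show ?thesis by simp
qed

lemma le_of_le_plus_eta:
  fixes A B C :: real
  assumes C: "C \<ge> 0" and h: "\<And>\<eta>. 0 < \<eta> \<Longrightarrow> \<eta> \<le> 1 \<Longrightarrow> A - C * \<eta> \<le> B"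
  shows "A \<le> B"
proof (rule ccontr)
  assume "\<not> A \<le> B"
  then have g: "A - B > 0" by simp
  define \<eta> where "\<eta> = min 1 ((A - B) / (2 * (C + 1)))"
  have e: "0 < \<eta>" "\<eta> \<le> 1" using g C unfolding \<eta>_def by auto
  have "C * \<eta> \<le> (C + 1) * ((A - B) / (2 * (C + 1)))"
    using C e g unfolding \<eta>_def by (intro mult_mono) auto
  also have "\<dots> = (A - B) / 2" using C by (simp add: field_simps)
  finally have c1: "C * \<eta> \<le> (A - B) / 2" .
  have c2: "A - B \<le> C * \<eta>" using h[OF e] by linarith
  show False using c1 c2 g by argo
qed

lemma sum_abs_le_card_norm: "(\<Sum>i\<in>UNIV. \<bar>(v::real^'n) $ i\<bar>) \<le> real CARD('n) * norm v"
proof -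
  have "(\<Sum>i\<in>UNIV. \<bar>v $ i\<bar>) \<le> (\<Sum>i\<in>(UNIV::'n set). norm v)" by (rule sum_mono) (rule component_le_norm_cart)
  then show ?thesis by simp
qed

section \<open>Matrices with nonnegative off-diagonal entries and negative column sums\<close>

definition dominant_cone :: "real \<Rightarrow> (real^'n^'n) set" where
  "dominant_cone e = {A. (\<forall>k l. k \<noteq> l \<longrightarrow> 0 \<le> A$k$l) \<and> (\<forall>l. (\<Sum>k\<in>UNIV. A$k$l) \<le> - e)}"

lemma convex_dominant_cone: "convex (dominant_cone e)"
  unfolding convex_def dominant_cone_def
proof (intro ballI allI impI CollectI conjI, goal_cases)
  case (1 x y u v k l)
  then show ?case by (auto intro!: add_nonneg_nonneg mult_nonneg_nonneg)
next
  case (2 x y u v l)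
  have "(\<Sum>k\<in>UNIV. (u *\<^sub>R x + v *\<^sub>R y) $ k $ l) = u * (\<Sum>k\<in>UNIV. x$k$l) + v * (\<Sum>k\<in>UNIV. y$k$l)"
    by (simp add: sum.distrib sum_distrib_left)
  also have "\<dots> \<le> u * (- e) + v * (- e)"
    using 2 by (intro add_mono mult_left_mono) auto
  also have "\<dots> = - e"
  proof -
    have "u * (- e) + v * (- e) = - (e * (u + v))" by (simp add: algebra_simps)
    then show ?thesis using 2 by simp
  qed
  finally show ?case .
qed

lemma closed_dominant_cone: "closed (dominant_cone e)"
proof -
  have eq: "dominant_cone e = (\<Inter>p\<in>{p. fst p \<noteq> snd p}. {A::real^'n^'n. 0 \<le> A $ fst p $ snd p}) \<inter>
      (\<Inter>l\<in>UNIV. {A::real^'n^'n. (\<Sum>k\<in>UNIV. A$k$l) \<le> - e})"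
    unfolding dominant_cone_def by auto
  have cl1: "closed {A::real^'n^'n. 0 \<le> A $ fst p $ snd p}" for p
    by (rule closed_Collect_le) (intro continuous_intros)+
  have cl2: "closed {A::real^'n^'n. (\<Sum>k\<in>UNIV. A$k$l) \<le> - e}" for l
    by (rule closed_Collect_le) (intro continuous_intros)+
  have c1: "closed (\<Inter>p\<in>{p. fst p \<noteq> snd p}. {A::real^'n^'n. 0 \<le> A $ fst p $ snd p})"
    by (rule closed_INT) (use cl1 in blast)
  have c2: "closed (\<Inter>l\<in>UNIV. {A::real^'n^'n. (\<Sum>k\<in>UNIV. A$k$l) \<le> - e})"
    by (rule closed_INT) (use cl2 in blast)
  show ?thesis unfolding eq by (rule closed_Int[OF c1 c2])
qed

lemma rank_dominant_cone:
  fixes A :: "real^'n^'n"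
  assumes A: "A \<in> dominant_cone e" and e: "e > 0"
  shows "rank A = CARD('n)"
proof -
  have inj: "inj ((*v) A)"
  proof -
    have "v = 0" if Av: "A *v v = 0" for v
    proof -
      define \<sigma> where "\<sigma> k = - sgn (v$k)" for k
      have "0 = (\<Sum>k\<in>UNIV. \<sigma> k * (A *v v) $ k)" using Av by simp
      also have "\<dots> = (\<Sum>k\<in>UNIV. \<Sum>l\<in>UNIV. v$l * (\<sigma> k * A$k$l))"
        by (simp add: matrix_vector_mult_def sum_distrib_left algebra_simps)
      also have "\<dots> = (\<Sum>l\<in>UNIV. \<Sum>k\<in>UNIV. v$l * (\<sigma> k * A$k$l))"
        by (rule sum.swap)
      also have "\<dots> = (\<Sum>l\<in>UNIV. v$l * (\<Sum>k\<in>UNIV. \<sigma> k * A$k$l))"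
        by (simp add: sum_distrib_left)
      also have "\<dots> \<ge> (\<Sum>l\<in>UNIV. e * \<bar>v$l\<bar>)"
      proof (rule sum_mono)
        fix l
        have "v$l * (\<Sum>k\<in>UNIV. \<sigma> k * A$k$l) = (\<Sum>k\<in>UNIV. v$l * \<sigma> k * A$k$l)"
          by (simp add: sum_distrib_left mult.assoc)
        also have "\<dots> \<ge> (\<Sum>k\<in>UNIV. - \<bar>v$l\<bar> * A$k$l)"
        proof (rule sum_mono)
          fix k
          show "v$l * \<sigma> k * A$k$l \<ge> - \<bar>v$l\<bar> * A$k$l"
          proof (cases "k = l")
            case True then show ?thesis unfolding \<sigma>_def by (simp add: sgn_if)
          next
            case False
            then have nn: "0 \<le> A$k$l" using A unfolding dominant_cone_def by auto
            have "\<bar>v$l * \<sigma> k\<bar> \<le> \<bar>v$l\<bar>" unfolding \<sigma>_def by (simp add: abs_mult sgn_if)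
            then have m: "- \<bar>v$l\<bar> \<le> v$l * \<sigma> k" by linarith
            show ?thesis using mult_right_mono[OF m nn] by simp
          qed
        qed
        also have "(\<Sum>k\<in>UNIV. - \<bar>v$l\<bar> * A$k$l) = - \<bar>v$l\<bar> * (\<Sum>k\<in>UNIV. A$k$l)"
          by (simp add: sum_distrib_left)
        also have "\<dots> \<ge> e * \<bar>v$l\<bar>"
        proof -
          have "(\<Sum>k\<in>UNIV. A$k$l) \<le> - e" using A unfolding dominant_cone_def by auto
          then have "\<bar>v$l\<bar> * (\<Sum>k\<in>UNIV. A$k$l) \<le> \<bar>v$l\<bar> * (- e)" by (intro mult_left_mono) auto
          then show ?thesis by (simp add: algebra_simps)
        qed
        finally show "v$l * (\<Sum>k\<in>UNIV. \<sigma> k * A$k$l) \<ge> e * \<bar>v$l\<bar>" .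
      qed
      finally have "(\<Sum>l\<in>UNIV. e * \<bar>v$l\<bar>) \<le> 0" .
      then have "(\<Sum>l\<in>UNIV. \<bar>v$l\<bar>) \<le> 0" using e by (simp add: sum_distrib_left[symmetric] mult_le_0_iff)
      then have "\<forall>l\<in>UNIV. \<bar>v$l\<bar> = 0" by (subst sum_nonneg_eq_0_iff[symmetric]) (auto intro: antisym sum_nonneg)
      then show "v = 0" by (simp add: vec_eq_iff)
    qed
    then show ?thesis using linear_injective_0[OF matrix_vector_mul_linear[of A]] by auto
  qed
  then show ?thesis by (rule full_rank_injective[THEN iffD2])
qed

section \<open>Cubes and bi-Lipschitz maps\<close>

definition cube :: "real^'n \<Rightarrow> real \<Rightarrow> (real^'n) set" where
  "cube c d = {x. \<forall>i. \<bar>x $ i - c $ i\<bar> < d}"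

lemma cube_mono: "d' \<le> d \<Longrightarrow> cube c d' \<subseteq> cube c d"
  unfolding cube_def by (auto intro: less_le_trans)

lemma dist_lt_if_in_cube:
  fixes x c :: "real^'n"
  assumes "x \<in> cube c (e / CARD('n))" "e > 0"
  shows "dist x c < e"
proof -
  have "dist x c = norm (x - c)" by (simp add: dist_norm)
  also have "\<dots> \<le> (\<Sum>i\<in>UNIV. \<bar>(x - c) $ i\<bar>)" by (rule norm_le_l1_cart)
  also have "\<dots> < (\<Sum>i\<in>(UNIV::'n set). e / CARD('n))"
    by (rule sum_strict_mono) (use assms in \<open>auto simp: cube_def\<close>)
  also have "\<dots> = e" by simp
  finally show ?thesis .
qed

lemma open_cube: "open (cube (c::real^'n) d)"
proof -
  have "cube c d = (\<Inter>i\<in>UNIV. {x::real^'n. \<bar>x$i - c$i\<bar> < d})" unfolding cube_def by auto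
  moreover have "open {x::real^'n. \<bar>x$i - c$i\<bar> < d}" for i
    by (rule open_Collect_less) (intro continuous_intros)+
  ultimately show ?thesis by auto
qed

lemma axis_step_diff:
  assumes "b = a + h *\<^sub>R axis l (1::real)"
  shows "a$i - b$i = (if i = l then - h else 0)"
  using assms by (simp add: axis_def)

lemma axis_step_in_cube:
  assumes z: "z \<in> cube c d"
  shows "eventually (\<lambda>h. 0 < h \<and> z + h *\<^sub>R axis l (1::real) \<in> cube c d) (at_right 0)"
  unfolding eventually_at_right_field
proof (intro exI[of _ "d - \<bar>z$l - c$l\<bar>"] conjI allI impI)
  show "0 < d - \<bar>z$l - c$l\<bar>" using z unfolding cube_def by auto
  fix h :: real assume h: "0 < h" "h < d - \<bar>z$l - c$l\<bar>"
  show "0 < h" using h by simp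
  show "z + h *\<^sub>R axis l 1 \<in> cube c d" unfolding cube_def
  proof (intro CollectI allI)
    fix i
    show "\<bar>(z + h *\<^sub>R axis l 1) $ i - c $ i\<bar> < d"
    proof (cases "i = l")
      case True then show ?thesis using h by (simp add: axis_def)
    next
      case False then show ?thesis using z unfolding cube_def by (simp add: axis_def)
    qed
  qed
qed

lemma has_derivative_axis_quotient:
  fixes f :: "real^'n \<Rightarrow> real^'m"
  assumes hD: "(f has_derivative D) (at z)"
  shows "((\<lambda>h. (f (z + h *\<^sub>R axis l 1) $ k - f z $ k) / h) \<longlongrightarrow> D (axis l 1) $ k) (at_right 0)"
proof -
  let ?v = "axis l (1::real) :: real^'n"
  have lin: "linear D" by (rule has_derivative_linear[OF hD])
  have h1: "((\<lambda>h. z + h *\<^sub>R ?v) has_derivative (\<lambda>h. h *\<^sub>R ?v)) (at 0)"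
    by (auto intro!: derivative_eq_intros)
  have h2: "(f has_derivative D) (at ((\<lambda>h. z + h *\<^sub>R ?v) 0))" using hD by simp
  have "((\<lambda>h. f (z + h *\<^sub>R ?v)) has_derivative (\<lambda>h. D (h *\<^sub>R ?v))) (at 0)"
    using has_derivative_compose[OF h1 h2] by simp
  then have "((\<lambda>h. f (z + h *\<^sub>R ?v) $ k) has_derivative (\<lambda>h. D (h *\<^sub>R ?v) $ k)) (at 0)"
    by (rule bounded_linear.has_derivative[OF bounded_linear_vec_nth])
  moreover have "(\<lambda>h. D (h *\<^sub>R ?v) $ k) = (\<lambda>h. (D ?v $ k) * h)"
    using linear_cmul[OF lin] by (auto simp: mult.commute)
  ultimately have "((\<lambda>h. f (z + h *\<^sub>R ?v) $ k) has_field_derivative (D ?v $ k)) (at 0)"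
    by (simp add: has_field_derivative_def)
  then have "((\<lambda>y. (f (z + y *\<^sub>R ?v) $ k - f (z + 0 *\<^sub>R ?v) $ k) / (y - 0)) \<longlongrightarrow> D ?v $ k) (at 0)"
    by (simp add: has_field_derivative_iff)
  then have "((\<lambda>h. (f (z + h *\<^sub>R ?v) $ k - f z $ k) / h) \<longlongrightarrow> D ?v $ k) (at 0)" by simp
  then show ?thesis by (simp add: filterlim_at_split)
qed

lemma bi_lipschitz_open_homeomorphism:
  fixes f :: "'a::euclidean_space \<Rightarrow> 'a"
  assumes U: "open U" and L: "L > 0"
    and bi: "\<And>a b. a \<in> U \<Longrightarrow> b \<in> U \<Longrightarrow> dist a b \<le> L * dist (f a) (f b) \<and> dist (f a) (f b) \<le> L * dist a b"
  shows "open (f ` U) \<and> homeomorphism U (f ` U) f (inv_into U f)"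
proof -
  have inj: "inj_on f U"
  proof (rule inj_onI)
    fix a b assume "a \<in> U" "b \<in> U" "f a = f b"
    then show "a = b" using bi[of a b] by simp
  qed
  have contf: "continuous_on U f"
    by (rule lipschitz_on_continuous_on[of L], rule lipschitz_onI) (use bi L in auto)
  have contg: "continuous_on (f ` U) (inv_into U f)"
  proof (rule lipschitz_on_continuous_on[of L], rule lipschitz_onI)
    fix y1 y2 assume "y1 \<in> f ` U" "y2 \<in> f ` U"
    then obtain a b where "a \<in> U" "b \<in> U" "y1 = f a" "y2 = f b" by blast
    then show "dist (inv_into U f y1) (inv_into U f y2) \<le> L * dist y1 y2" using bi[of a b] inj by simp
  qed (use L in simp)
  have "homeomorphism U (f ` U) f (inv_into U f)"
    by (rule homeomorphismI[OF contf contg]) (use inj in \<open>auto simp: f_inv_into_f inv_into_into\<close>)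
  then show ?thesis using invariance_of_domain[OF contf U inj] by blast
qed

section \<open>Ordering the singularities\<close>

lemma idx_pos_sorted_nth:
  fixes m :: nat
  defines "xs \<equiv> sorted_list_of_set (UNIV :: 'n::{finite,linorder} set)"
  assumes m: "m < CARD('n)"
  shows "idx_pos (xs ! m) = m"
proof -
  have xs: "set xs = UNIV" "distinct xs" "sorted_wrt (<) xs" "length xs = CARD('n)"
    unfolding xs_def by (simp_all add: strict_sorted_list_of_set)
  have "{j. j < xs ! m} = (\<lambda>i. xs ! i) ` {..<m}"
  proof (intro set_eqI iffI)
    fix j assume "j \<in> {j. j < xs ! m}"
    then have jl: "j < xs ! m" by simp
    obtain i where i: "i < length xs" "xs ! i = j" using xs(1) by (metis UNIV_I in_set_conv_nth)
    have "i < m"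
    proof (rule ccontr)
      assume "\<not> i < m"
      then have "xs ! m \<le> xs ! i"
        using xs(3) i m by (metis le_less not_less sorted_wrt_nth_less)
      then show False using jl i by simp
    qed
    then show "j \<in> (\<lambda>i. xs ! i) ` {..<m}" using i by auto
  next
    fix j assume "j \<in> (\<lambda>i. xs ! i) ` {..<m}"
    then obtain i where "i < m" "j = xs ! i" by auto
    then show "j \<in> {j. j < xs ! m}" using sorted_wrt_nth_less[OF xs(3)] m xs(4) by auto
  qed
  moreover have "inj_on (\<lambda>i. xs ! i) {..<m}"
    using inj_on_nth[OF xs(2)] m xs(4) by auto
  ultimately show ?thesis unfolding idx_pos_def by (simp add: card_image)
qed

lemma idx_pos_lt: "idx_pos (i::'n::{finite,linorder}) < CARD('n)"
proof -
  have "{j. j < i} \<subset> UNIV" by auto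
  then show ?thesis unfolding idx_pos_def by (simp add: psubset_card_mono)
qed

lemma idx_of_idx_pos: "idx_of (idx_pos (i::'n::{finite,linorder}) + 1) = i"
proof -
  let ?xs = "sorted_list_of_set (UNIV :: 'n set)"
  obtain m where m: "m < length ?xs" "?xs ! m = i" by (metis UNIV_I in_set_conv_nth set_sorted_list_of_set finite)
  then have "idx_pos i = m" using idx_pos_sorted_nth[where 'n='n, of m] by simp
  then show ?thesis using m unfolding idx_of_def by simp
qed

lemma idx_pos_idx_of:
  "1 \<le> k \<Longrightarrow> k \<le> CARD('n) \<Longrightarrow> idx_pos (idx_of k :: 'n::{finite,linorder}) = k - 1"
  unfolding idx_of_def using idx_pos_sorted_nth[where 'n='n, of "k - 1"] by auto

lemma idx_pos_less_iff: "idx_pos (i::'n::{finite,linorder}) < idx_pos j \<longleftrightarrow> i < j"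
proof -
  have "idx_pos i < idx_pos j" if "i < j" for i j :: 'n
  proof -
    have "{x. x < i} \<subset> {x. x < j}" using that by auto
    then show ?thesis unfolding idx_pos_def by (simp add: psubset_card_mono)
  qed
  then show ?thesis by (metis less_asym neq_iff)
qed

lemma bij_betw_idx_pos: "bij_betw (idx_pos :: 'n::{finite,linorder} \<Rightarrow> nat) UNIV {..<CARD('n)}"
proof (rule bij_betw_imageI)
  show "inj (idx_pos :: 'n \<Rightarrow> nat)" by (metis idx_of_idx_pos injI)
  have "m \<in> idx_pos ` (UNIV::'n set)" if "m < CARD('n)" for m
    using idx_pos_idx_of[of "m + 1", where 'n='n] that by (metis add_diff_cancel_right' le_add2 Suc_leI Suc_eq_plus1 rangeI)
  then show "idx_pos ` (UNIV::'n set) = {..<CARD('n)}" using idx_pos_lt by auto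
qed

lemma sum_reindex_idx_pos:
  "(\<Sum>i\<in>(UNIV::'n::{finite,linorder} set). f (idx_pos i)) = (\<Sum>m<CARD('n). f m)"
  using sum.reindex_bij_betw[OF bij_betw_idx_pos, of f] by simp

lemma idx_of_less:
  "1 \<le> k \<Longrightarrow> k < l \<Longrightarrow> l \<le> CARD('n) \<Longrightarrow> (idx_of k :: 'n::{finite,linorder}) < idx_of l"
  using idx_pos_idx_of[where 'n='n, of k] idx_pos_idx_of[where 'n='n, of l] idx_pos_less_iff[of "idx_of k :: 'n" "idx_of l"] by auto

lemma ypt_idx_pos: "ypt y (idx_pos (i::'n::{finite,linorder}) + 1) = y $ i"
  unfolding ypt_def using idx_pos_lt[of i] idx_of_idx_pos[of i] by auto

lemma ypt_strict_mono:
  fixes y :: "real^'n::{finite,linorder}"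
  assumes y: "y \<in> simplexS" and kl: "k < l" "l \<le> CARD('n) + 1"
  shows "ypt y k < ypt y l"
proof -
  have y01: "0 < y $ i" "y $ i < 1" for i using y unfolding simplexS_def by auto
  have ymono: "i < j \<Longrightarrow> y $ i < y $ j" for i j using y unfolding simplexS_def by auto
  show ?thesis
  proof (cases "k = 0")
    case True
    then show ?thesis using kl y01 unfolding ypt_def by auto
  next
    case False
    show ?thesis
    proof (cases "l = CARD('n) + 1")
      case True then show ?thesis using kl y01 False unfolding ypt_def by auto
    next
      case False2: False
      have "(idx_of k :: 'n) < idx_of l" using idx_of_less[where 'n='n, of k l] False False2 kl by auto
      then show ?thesis using ymono False False2 kl unfolding ypt_def by auto
    qed
  qed
qed

lemma ypt_mono:
  fixes y :: "real^'n::{finite,linorder}"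
  assumes y: "y \<in> simplexS" and kl: "k \<le> l" "l \<le> CARD('n) + 1"
  shows "ypt y k \<le> ypt y l"
  using ypt_strict_mono[OF y, of k l] kl by (cases "k = l") auto

lemma ypt_range:
  fixes y :: "real^'n::{finite,linorder}"
  assumes y: "y \<in> simplexS"
  shows "0 \<le> ypt y k" "ypt y k \<le> 1"
  using y unfolding ypt_def simplexS_def by (auto simp: less_imp_le)

lemma ypt_interval_side:
  fixes y :: "real^'n::{finite,linorder}"
  assumes y: "y \<in> simplexS" and j: "j \<le> CARD('n)" and t: "ypt y j \<le> t" "t \<le> ypt y (Suc j)"
  shows "idx_pos i < j \<Longrightarrow> y $ i \<le> t" "j \<le> idx_pos i \<Longrightarrow> t \<le> y $ i"
proof -
  show "idx_pos i < j \<Longrightarrow> y $ i \<le> t"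
    using ypt_mono[OF y, of "idx_pos i + 1" j] ypt_idx_pos[of y i] t j by auto
  show "j \<le> idx_pos i \<Longrightarrow> t \<le> y $ i"
    using ypt_mono[OF y, of "Suc j" "idx_pos i + 1"] ypt_idx_pos[of y i] t j idx_pos_lt[of i] by auto
qed

lemma ypt_interval_perturb:
  fixes x y :: "real^'n::{finite,linorder}"
  assumes y: "y \<in> simplexS" and j: "j \<le> CARD('n)" and t: "t \<in> {ypt y j..ypt y (Suc j)}"
    and close: "\<And>i. \<bar>x $ i - y $ i\<bar> < \<bar>t - y $ i\<bar>"
  shows "t \<in> {ypt x j..ypt x (Suc j)}"
proof -
  have t01: "0 \<le> t" "t \<le> 1" using t ypt_range[OF y, of j] ypt_range[OF y, of "Suc j"] by auto
  have "ypt x j \<le> t"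
  proof (cases "j = 0")
    case True then show ?thesis using t01 unfolding ypt_def by simp
  next
    case False
    then have "ypt x j = x $ idx_of j" "ypt y j = y $ idx_of j" using j unfolding ypt_def by auto
    then show ?thesis using t close[of "idx_of j"] by (auto simp: abs_less_iff abs_if split: if_splits)
  qed
  moreover have "t \<le> ypt x (Suc j)"
  proof (cases "Suc j = CARD('n) + 1")
    case True then show ?thesis using t01 unfolding ypt_def by simp
  next
    case False
    then have "ypt x (Suc j) = x $ idx_of (Suc j)" "ypt y (Suc j) = y $ idx_of (Suc j)"
      using j unfolding ypt_def by auto
    then show ?thesis using t close[of "idx_of (Suc j)"] by (auto simp: abs_less_iff abs_if split: if_splits)
  qed
  ultimately show ?thesis by simp
qed

lemma sum_indicator_idx_of:
  fixes X :: "nat \<Rightarrow> real"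
  shows "(\<Sum>m<CARD('n). (if idx_of (Suc m) = (k::'n::{finite,linorder}) then 1 else 0) * X m) = X (idx_pos k)"
proof -
  have "(\<Sum>m<CARD('n). (if idx_of (Suc m) = k then 1 else 0) * X m) = (\<Sum>m<CARD('n). if m = idx_pos k then X m else 0)"
  proof (rule sum.cong[OF refl])
    fix m assume m: "m \<in> {..<CARD('n)}"
    have "idx_of (Suc m) = k \<longleftrightarrow> m = idx_pos k"
    proof
      assume "idx_of (Suc m) = k"
      then have "idx_pos k = idx_pos (idx_of (Suc m) :: 'n)" by simp
      also have "\<dots> = m" using idx_pos_idx_of[where 'n='n, of "Suc m"] m by auto
      finally show "m = idx_pos k" by simp
    next
      assume "m = idx_pos k" then show "idx_of (Suc m) = k" using idx_of_idx_pos[of k] by simp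
    qed
    then show "(if idx_of (Suc m) = k then 1 else 0) * X m = (if m = idx_pos k then X m else 0)" by simp
  qed
  also have "\<dots> = X (idx_pos k)" using idx_pos_lt[of k] by simp
  finally show ?thesis .
qed

definition idx_weight :: "('n::{finite,linorder} \<Rightarrow> real) \<Rightarrow> nat \<Rightarrow> real" where
  "idx_weight \<tau> j = (if 1 \<le> j \<and> j \<le> CARD('n) then \<tau> (idx_of j) else 0)"

lemma sum_idx_weight_by_parts:
  fixes \<tau> :: "'n::{finite,linorder} \<Rightarrow> real"
  shows "(\<Sum>m<CARD('n). \<tau> (idx_of (Suc m)) * (X (Suc m) - X m)) =
    (\<Sum>j\<le>CARD('n). (idx_weight \<tau> j - idx_weight \<tau> (Suc j)) * X j)"
proof -
  have "(\<Sum>m<CARD('n). \<tau> (idx_of (Suc m)) * (X (Suc m) - X m)) =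
      (\<Sum>m<CARD('n). idx_weight \<tau> (Suc m) * (X (Suc m) - X m))"
    by (rule sum.cong) (auto simp: idx_weight_def)
  also have "\<dots> = (\<Sum>j\<le>CARD('n). (idx_weight \<tau> j - idx_weight \<tau> (Suc j)) * X j)"
    using summation_by_parts[of "idx_weight \<tau>" X "CARD('n)"] by (simp add: idx_weight_def)
  finally show ?thesis .
qed

lemma simplexS_cube_nbhd:
  fixes y :: "real^'n::{finite,linorder}"
  assumes y: "y \<in> simplexS"
  shows "\<exists>d>0. \<exists>\<mu>'>0. \<mu>' < 1 \<and> (\<forall>x\<in>cube y d. x \<in> simplexS \<and> (\<forall>i. \<mu>' \<le> x $ i \<and> x $ i \<le> 1 - \<mu>'))"
proof -
  have y01: "0 < y $ i" "y $ i < 1" and ymono: "i < j \<Longrightarrow> y $ i < y $ j" for i j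
    using y unfolding simplexS_def by auto
  have "\<exists>d>0. \<forall>i\<in>UNIV. d \<le> y $ i \<and> d \<le> 1 - y $ i"
  proof (rule finite_common_pos_radius)
    fix i :: 'n
    show "\<exists>d>0. d \<le> y $ i \<and> d \<le> 1 - y $ i"
      using y01[of i] by (intro exI[of _ "min (y $ i) (1 - y $ i)"]) auto
  qed auto
  then obtain \<mu>0 where \<mu>0: "\<mu>0 > 0" "\<forall>i\<in>UNIV. \<mu>0 \<le> y $ i \<and> \<mu>0 \<le> 1 - y $ i" by blast
  obtain g where g: "g > 0" "\<forall>p\<in>UNIV. fst p < snd p \<longrightarrow> g \<le> y $ snd p - y $ fst p"
  proof -
    have "\<exists>d>0. \<forall>p\<in>UNIV. fst p < snd p \<longrightarrow> d \<le> y $ snd p - y $ fst p"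
    proof (rule finite_common_pos_radius)
      fix p :: "'n \<times> 'n"
      show "\<exists>d>0. fst p < snd p \<longrightarrow> d \<le> y $ snd p - y $ fst p"
      proof (cases "fst p < snd p")
        case True
        then show ?thesis using ymono by (intro exI[of _ "y $ snd p - y $ fst p"]) auto
      qed (auto intro: exI[of _ 1])
    qed auto
    then show ?thesis using that by blast
  qed
  define d where "d = min (\<mu>0 / 2) (g / 2)"
  have "\<mu>0 < 1" using \<mu>0(2) y01(2)[of undefined] by force
  show ?thesis
  proof (rule exI[of _ d], intro exI[of _ "\<mu>0 / 2"] conjI ballI allI)
    show "0 < d" "0 < \<mu>0 / 2" "\<mu>0 / 2 < 1" using \<mu>0 g \<open>\<mu>0 < 1\<close> unfolding d_def by auto
    fix x assume x: "x \<in> cube y d"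
    then have xd: "\<bar>x $ i - y $ i\<bar> < d" for i unfolding cube_def by auto
    show xb: "\<mu>0 / 2 \<le> x $ i" "x $ i \<le> 1 - \<mu>0 / 2" for i
    proof -
      have "\<mu>0 \<le> y $ i" "\<mu>0 \<le> 1 - y $ i" using \<mu>0(2) by auto
      moreover have "\<bar>x $ i - y $ i\<bar> < \<mu>0 / 2" using xd[of i] unfolding d_def min_less_iff_conj by blast
      ultimately show "\<mu>0 / 2 \<le> x $ i" "x $ i \<le> 1 - \<mu>0 / 2" unfolding abs_less_iff by linarith+
    qed
    show "x \<in> simplexS" unfolding simplexS_def
    proof (intro CollectI conjI allI impI)
      fix i show "0 < x $ i" "x $ i < 1" using xb[of i] \<mu>0 by auto
    next
      fix i j :: 'n assume "i < j"
      then have "g \<le> y $ j - y $ i" using g(2) by (metis UNIV_I fst_conv snd_conv)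
      moreover have "\<bar>x $ i - y $ i\<bar> < g / 2" "\<bar>x $ j - y $ j\<bar> < g / 2"
        using xd unfolding d_def min_less_iff_conj by blast+
      ultimately show "x $ i < x $ j" unfolding abs_less_iff by linarith
    qed
  qed
qed

lemma Phi_nth: "Phi J K x $ i = real_of_ereal (mfun J K (Suc (idx_pos i)) x) - real_of_ereal (mfun J K (idx_pos i) x)"
  unfolding Phi_def by simp

lemma sum_Phi_diff_by_parts:
  fixes \<tau> :: "'n::{finite,linorder} \<Rightarrow> real"
  shows "(\<Sum>i\<in>UNIV. \<tau> i * (Phi J K b $ i - Phi J K a $ i)) =
    (\<Sum>j\<le>CARD('n). (idx_weight \<tau> j - idx_weight \<tau> (Suc j)) *
       (real_of_ereal (mfun J K j b) - real_of_ereal (mfun J K j a)))"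
proof -
  define \<Delta> where "\<Delta> j = real_of_ereal (mfun J K j b) - real_of_ereal (mfun J K j a)" for j
  have "(\<Sum>i\<in>UNIV. \<tau> i * (Phi J K b $ i - Phi J K a $ i)) =
      (\<Sum>i\<in>(UNIV::'n set). (\<lambda>m. \<tau> (idx_of (Suc m)) * (\<Delta> (Suc m) - \<Delta> m)) (idx_pos i))"
    unfolding Phi_nth \<Delta>_def by (intro sum.cong) (auto simp: algebra_simps idx_of_idx_pos[simplified])
  also have "\<dots> = (\<Sum>m<CARD('n). \<tau> (idx_of (Suc m)) * (\<Delta> (Suc m) - \<Delta> m))" by (rule sum_reindex_idx_pos)
  also have "\<dots> = (\<Sum>j\<le>CARD('n). (idx_weight \<tau> j - idx_weight \<tau> (Suc j)) * \<Delta> j)"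
    by (rule sum_idx_weight_by_parts)
  finally show ?thesis unfolding \<Delta>_def .
qed

section \<open>Near-maximizers of \<open>F\<close>\<close>

locale kernel_system =
  fixes K :: "'n::{finite,linorder} \<Rightarrow> real \<Rightarrow> ereal" and J :: "real \<Rightarrow> ereal"
  assumes kern: "\<And>i. kernel_function (K i)"
    and sing: "\<And>i. singular_kernel (K i)"
    and strict: "\<And>i. strictly_concave_kernel (K i)"
    and pm0: "\<And>i. PM0 (K i)"
    and nfield: "n_field_function CARD('n) J"
    and bdry: "(J 0 = -\<infinity> \<and> (J \<longlongrightarrow> -\<infinity>) (at_right 0)) \<or>
               (J 1 = -\<infinity> \<and> (J \<longlongrightarrow> -\<infinity>) (at_left 1))"
begin

abbreviation kr :: "'n \<Rightarrow> real \<Rightarrow> real" where "kr i \<equiv> (\<lambda>s. real_of_ereal (K i s))"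

abbreviation Jr :: "real \<Rightarrow> real" where "Jr \<equiv> (\<lambda>t. real_of_ereal (J t))"

abbreviation mr :: "nat \<Rightarrow> real^('n::{finite,linorder}) \<Rightarrow> real" where "mr j y \<equiv> real_of_ereal (mfun J K j y)"

abbreviation F :: "real^('n::{finite,linorder}) \<Rightarrow> real \<Rightarrow> ereal" where "F \<equiv> Ffun J K"

lemma K_finite: "s \<in> {-1<..<0} \<union> {0<..<1} \<Longrightarrow> K i s = ereal (kr i s)"
  using kern[of i] unfolding kernel_function_def by (metis real_of_ereal.simps(1) ereal_real')

lemma K0: "K i 0 = -\<infinity>" using sing[of i] unfolding singular_kernel_def by simp

lemma K_not_PInf: "\<bar>s\<bar> < 1 \<Longrightarrow> K i s \<noteq> \<infinity>"
proof -
  assume "\<bar>s\<bar> < 1"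
  then consider "s = 0" | "s \<in> {-1<..<0} \<union> {0<..<1}" by (cases "s = 0") (auto simp: abs_if split: if_splits)
  then show ?thesis
  proof cases
    case 1 then show ?thesis using K0 by simp
  next
    case 2
    then have "\<exists>r. K i s = ereal r" using K_finite[of s i] by blast
    then show ?thesis by auto
  qed
qed

lemma kr_concave_neg: "concave_on {-1<..<0} (kr i)" and kr_concave_pos: "concave_on {0<..<1} (kr i)"
  using kern[of i] unfolding kernel_function_def by auto

lemma kr_strictly_concave_neg: "strictly_concave_on {-1<..<0} (kr i)"
  using strict[of i] unfolding strictly_concave_kernel_def by auto

lemma kr_PM0: "AE t in lborel. t \<in> {0<..<1} \<longrightarrow> deriv (kr i) t - deriv (kr i) (t - 1) \<ge> 0"
  using pm0[of i] unfolding PM0_def by auto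

lemma K_lim_right: "(K i \<longlongrightarrow> -\<infinity>) (at_right 0)" and K_lim_left: "(K i \<longlongrightarrow> -\<infinity>) (at_left 0)"
  using kern[of i] K0[of i] unfolding kernel_function_def by auto

lemma J_not_PInf: "t \<in> {0..1} \<Longrightarrow> J t \<noteq> \<infinity>"
  using nfield unfolding n_field_function_def by auto

lemma J_bounded_above: "\<exists>M. \<forall>t\<in>{0..1}. J t \<le> ereal M"
  using nfield unfolding n_field_function_def by auto

lemma simplexS_D:
  assumes "y \<in> simplexS"
  shows "0 < y $ i" "y $ i < 1" "i < j \<Longrightarrow> y $ i < y $ j"
  using assms unfolding simplexS_def by auto

lemma F_finite_eq:
  assumes y: "y \<in> simplexS" and t: "t \<in> {0..1}" and Jt: "J t \<noteq> -\<infinity>" and ne: "\<And>i. t \<noteq> y $ i"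
  shows "F y t = ereal (Jr t + (\<Sum>i\<in>UNIV. kr i (t - y $ i)))"
proof -
  have "K i (t - y $ i) = ereal (kr i (t - y $ i))" for i
  proof (rule K_finite)
    show "t - y $ i \<in> {-1<..<0} \<union> {0<..<1}" using simplexS_D[OF y, of i] t ne[of i] by auto
  qed
  then have s: "(\<Sum>i\<in>UNIV. K i (t - y $ i)) = ereal (\<Sum>i\<in>UNIV. kr i (t - y $ i))"
    by (simp add: sum_ereal[symmetric] del: sum_ereal)
  obtain r where r: "J t = ereal r" using Jt J_not_PInf[OF t] by (cases "J t") auto
  then show ?thesis unfolding Ffun_def s by simp
qed

lemma F_MInfty:
  assumes y: "y \<in> simplexS" and t: "t \<in> {0..1}" and c: "J t = -\<infinity> \<or> (\<exists>i. t = y $ i)"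
  shows "F y t = -\<infinity>"
proof -
  have ni: "K i (t - y $ i) \<noteq> \<infinity>" for i
    by (rule K_not_PInf) (use simplexS_D[OF y, of i] t in auto)
  have sni: "(\<Sum>i\<in>UNIV. K i (t - y $ i)) \<noteq> \<infinity>" using ni by (simp add: sum_Pinfty)
  show ?thesis
  proof (cases "J t = -\<infinity>")
    case True then show ?thesis unfolding Ffun_def using sni by simp
  next
    case False
    then obtain i where i: "t = y $ i" using c by auto
    have "(\<Sum>i\<in>UNIV. K i (t - y $ i)) = -\<infinity>"
      by (rule sum_ereal_MInfty[of _ i]) (use i K0 ni in auto)
    then show ?thesis unfolding Ffun_def using J_not_PInf[OF t] by simp
  qed
qed

lemma kr_bounded_above: "\<exists>MK\<ge>0. \<forall>i s. \<bar>s\<bar> < 1 \<longrightarrow> s \<noteq> 0 \<longrightarrow> kr i s \<le> MK"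
proof -
  have "\<exists>M. \<forall>s\<in>{-1<..<0}. kr i s \<le> M" for i by (rule concave_on_bdd_above[OF kr_concave_neg]) auto
  moreover have "\<exists>M. \<forall>s\<in>{0<..<1}. kr i s \<le> M" for i by (rule concave_on_bdd_above[OF kr_concave_pos]) auto
  ultimately obtain M1 M2 where M1: "\<And>i s. s \<in> {-1<..<0} \<Longrightarrow> kr i s \<le> M1 i"
    and M2: "\<And>i s. s \<in> {0<..<1} \<Longrightarrow> kr i s \<le> M2 i" by metis
  define MK where "MK = (\<Sum>i\<in>UNIV. \<bar>M1 i\<bar> + \<bar>M2 i\<bar>)"
  have le: "\<bar>M1 i\<bar> + \<bar>M2 i\<bar> \<le> MK" for i
    unfolding MK_def by (rule member_le_sum) auto
  show ?thesis
  proof (intro exI[of _ MK] conjI allI impI)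
    show "MK \<ge> 0" unfolding MK_def by (intro sum_nonneg) auto
    fix i and s :: real assume s: "\<bar>s\<bar> < 1" "s \<noteq> 0"
    then consider "s \<in> {-1<..<0}" | "s \<in> {0<..<1}" by (cases "s < 0") (auto simp: abs_if)
    then show "kr i s \<le> MK"
    proof cases
      case 1 then show ?thesis using M1[OF 1, of i] le[of i] by linarith
    next
      case 2 then show ?thesis using M2[OF 2, of i] le[of i] by linarith
    qed
  qed
qed

lemma kr_small_near_0: "\<exists>\<mu>>0. \<mu> \<le> 1 \<and> (\<forall>i s. s \<noteq> 0 \<longrightarrow> \<bar>s\<bar> < \<mu> \<longrightarrow> kr i s < B)"
proof -
  have "\<exists>d>0. \<forall>s. s \<noteq> 0 \<longrightarrow> \<bar>s\<bar> < d \<longrightarrow> K i s < ereal B" for i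
  proof -
    have "eventually (\<lambda>s. K i s < ereal B) (at_right 0)" using K_lim_right[of i] unfolding tendsto_MInfty by auto
    then obtain b1 where b1: "b1 > 0" "\<And>s. 0 < s \<Longrightarrow> s < b1 \<Longrightarrow> K i s < ereal B"
      unfolding eventually_at_right_field by auto
    have "eventually (\<lambda>s. K i s < ereal B) (at_left 0)" using K_lim_left[of i] unfolding tendsto_MInfty by auto
    then obtain b2 where b2: "b2 < 0" "\<And>s. b2 < s \<Longrightarrow> s < 0 \<Longrightarrow> K i s < ereal B"
      unfolding eventually_at_left_field by auto
    show ?thesis
      by (rule exI[of _ "min b1 (- b2)"]) (use b1 b2 in \<open>auto simp: abs_if split: if_splits\<close>)
  qed
  then obtain d where d: "d > 0" "\<forall>i\<in>UNIV. \<forall>s. s \<noteq> 0 \<longrightarrow> \<bar>s\<bar> < d \<longrightarrow> K i s < ereal B"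
    using finite_common_pos_radius[of "UNIV :: 'n set" "\<lambda>i d. \<forall>s. s \<noteq> 0 \<longrightarrow> \<bar>s\<bar> < d \<longrightarrow> K i s < ereal B"]
    by fastforce
  show ?thesis
  proof (intro exI[of _ "min d 1"] conjI allI impI)
    fix i s assume s: "s \<noteq> 0" "\<bar>s\<bar> < min d 1"
    then have "s \<in> {-1<..<0} \<union> {0<..<1}" by (cases "s < 0") (auto simp: abs_if)
    then have "\<exists>r. K i s = ereal r" using K_finite by blast
    then obtain r where r: "K i s = ereal r" by blast
    moreover have "K i s < ereal B" using d s by auto
    ultimately show "kr i s < B" by simp
  qed (use d in auto)
qed

lemma J_small_near_0:
  assumes "(J \<longlongrightarrow> -\<infinity>) (at_right 0)"
  shows "\<exists>\<mu>>0. \<forall>t. 0 < t \<longrightarrow> t < \<mu> \<longrightarrow> J t < ereal B"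
proof -
  have "eventually (\<lambda>s. J s < ereal B) (at_right 0)" using assms unfolding tendsto_MInfty by auto
  then show ?thesis unfolding eventually_at_right_field by auto
qed

lemma J_small_near_1:
  assumes "(J \<longlongrightarrow> -\<infinity>) (at_left 1)"
  shows "\<exists>\<mu>>0. \<forall>t. 1 - \<mu> < t \<longrightarrow> t < 1 \<longrightarrow> J t < ereal B"
proof -
  have "eventually (\<lambda>s. J s < ereal B) (at_left 1)" using assms unfolding tendsto_MInfty by auto
  then obtain b where "b < 1" "\<And>s. b < s \<Longrightarrow> s < 1 \<Longrightarrow> J s < ereal B" unfolding eventually_at_left_field
    by auto
  then show ?thesis by (intro exI[of _ "1 - b"]) auto
qed

lemma kr_isCont:
  assumes "s \<in> {-1<..<0} \<union> {0<..<1}"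
  shows "isCont (kr i) s"
proof -
  have "continuous_on {-1<..<0} (kr i)" by (rule concave_on_continuous_on[OF kr_concave_neg])
  moreover have "continuous_on {0<..<1} (kr i)" by (rule concave_on_continuous_on[OF kr_concave_pos])
  ultimately show ?thesis using assms by (auto simp: continuous_on_eq_continuous_at)
qed

lemma isCont_kernel_sum:
  assumes y: "y \<in> simplexS" and t: "t \<in> {0..1}" and ne: "\<And>i. t \<noteq> y $ i"
  shows "isCont (\<lambda>x::real^('n::{finite,linorder}). \<Sum>i\<in>UNIV. kr i (t - x $ i)) y"
proof (intro continuous_sum)
  fix i :: 'n
  have "t - y $ i \<in> {-1<..<0} \<union> {0<..<1}" using ne[of i] t simplexS_D[OF y, of i] by auto
  moreover have "isCont (\<lambda>x::real^('n::{finite,linorder}). t - x $ i) y" by (intro continuous_intros)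
  ultimately show "isCont (\<lambda>x::real^('n::{finite,linorder}). kr i (t - x $ i)) y"
    using continuous_at_compose[of y "\<lambda>x::real^('n::{finite,linorder}). t - x $ i" "kr i"] kr_isCont by (simp add: o_def)
qed

lemma kr_shift_bounded_above:
  "\<exists>MK\<ge>0. \<forall>i x t. x \<in> simplexS \<longrightarrow> t \<in> {0..1} \<longrightarrow> t \<noteq> x $ i \<longrightarrow> kr i (t - x $ i) \<le> MK"
proof -
  obtain MK where MK: "MK \<ge> 0" "\<forall>i s. \<bar>s\<bar> < 1 \<longrightarrow> s \<noteq> 0 \<longrightarrow> kr i s \<le> MK"
    using kr_bounded_above by blast
  have "kr i (t - x $ i) \<le> MK" if "x \<in> simplexS" "t \<in> {0..1}" "t \<noteq> x $ i" for i x t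
  proof -
    have "\<bar>t - x $ i\<bar> < 1" using simplexS_D(1,2)[OF that(1), of i] that(2) by auto
    then show ?thesis using MK(2) that(3) by auto
  qed
  then show ?thesis using MK(1) by blast
qed

lemma F_bounded_above: "\<exists>U. \<forall>x\<in>simplexS. \<forall>t\<in>{0..1}. F x t \<le> ereal U"
proof -
  obtain MJ where MJ: "\<forall>t\<in>{0..1}. J t \<le> ereal MJ" using J_bounded_above by blast
  obtain MK where MK: "\<forall>i x t. x \<in> simplexS \<longrightarrow> t \<in> {0..1} \<longrightarrow> t \<noteq> x $ i \<longrightarrow> kr i (t - x $ i) \<le> MK"
    using kr_shift_bounded_above by blast
  have "F x t \<le> ereal (MJ + real CARD('n) * MK)" if x: "x \<in> simplexS" and t: "t \<in> {0..1}" for x t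
  proof (cases "J t = -\<infinity> \<or> (\<exists>i. t = x $ i)")
    case True then show ?thesis using F_MInfty[OF x t] by simp
  next
    case False
    have "J t \<le> ereal MJ" using MJ t by blast
    then have "Jr t \<le> MJ" using False J_not_PInf[OF t] by (cases "J t") auto
    moreover have "(\<Sum>i\<in>UNIV. kr i (t - x $ i)) \<le> (\<Sum>i\<in>(UNIV::'n set). MK)"
      by (rule sum_mono) (use MK False t x in blast)
    ultimately show ?thesis using F_finite_eq[OF x t] False by auto
  qed
  then show ?thesis by blast
qed

lemma mfun_bounded_above: "\<exists>U. \<forall>x\<in>simplexS. \<forall>j. mfun J K j x \<le> ereal U"
proof -
  obtain U where U: "\<forall>x\<in>simplexS. \<forall>t\<in>{0..1}. F x t \<le> ereal U" using F_bounded_above by blast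
  have "mfun J K j x \<le> ereal U" if x: "x \<in> simplexS" for x j
    unfolding mfun_def
  proof (rule SUP_least)
    fix t assume "t \<in> {ypt x j..ypt x (Suc j)}"
    then have "t \<in> {0..1}" using ypt_range[OF x, of j] ypt_range[OF x, of "Suc j"] by auto
    then show "F x t \<le> ereal U" using U x by blast
  qed
  then show ?thesis by blast
qed

lemma F_small_near_singularity:
  "\<exists>\<mu>>0. \<forall>x\<in>simplexS. \<forall>t\<in>{0..1}. \<forall>i. \<bar>t - x $ i\<bar> < \<mu> \<longrightarrow> F x t < ereal B"
proof -
  obtain MJ where MJ: "\<forall>t\<in>{0..1}. J t \<le> ereal MJ" using J_bounded_above by blast
  obtain MK where MK: "MK \<ge> 0"
    "\<forall>i x t. x \<in> simplexS \<longrightarrow> t \<in> {0..1} \<longrightarrow> t \<noteq> x $ i \<longrightarrow> kr i (t - x $ i) \<le> MK"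
    using kr_shift_bounded_above by blast
  obtain \<mu> where \<mu>: "\<mu> > 0" "\<forall>i s. s \<noteq> 0 \<longrightarrow> \<bar>s\<bar> < \<mu> \<longrightarrow> kr i s < B - MJ - real CARD('n) * MK"
    using kr_small_near_0 by blast
  have "F x t < ereal B" if x: "x \<in> simplexS" and t: "t \<in> {0..1}" and near: "\<bar>t - x $ i\<bar> < \<mu>" for x t i
  proof (cases "J t = -\<infinity> \<or> (\<exists>i. t = x $ i)")
    case True then show ?thesis using F_MInfty[OF x t] by simp
  next
    case False
    have "J t \<le> ereal MJ" using MJ t by blast
    then have "Jr t \<le> MJ" using False J_not_PInf[OF t] by (cases "J t") auto
    moreover have "(\<Sum>i\<in>UNIV. kr i (t - x $ i)) \<le> kr i (t - x $ i) + real CARD('n) * MK"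
      by (rule sum_le_member_plus) (use MK False t x in auto)
    moreover have "kr i (t - x $ i) < B - MJ - real CARD('n) * MK" using \<mu>(2) near False by auto
    ultimately show ?thesis using F_finite_eq[OF x t] False by auto
  qed
  then show ?thesis using \<mu>(1) by blast
qed

lemma F_small_near_boundary:
  "\<exists>\<mu>>0. (\<forall>x\<in>simplexS. \<forall>t\<in>{0..1}. t < \<mu> \<longrightarrow> F x t < ereal B) \<or>
         (\<forall>x\<in>simplexS. \<forall>t\<in>{0..1}. 1 - \<mu> < t \<longrightarrow> F x t < ereal B)"
proof -
  obtain MK where MK: "\<forall>i x t. x \<in> simplexS \<longrightarrow> t \<in> {0..1} \<longrightarrow> t \<noteq> x $ i \<longrightarrow> kr i (t - x $ i) \<le> MK"
    using kr_shift_bounded_above by blast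
  let ?B = "B - real CARD('n) * MK"
  have small: "F x t < ereal B" if x: "x \<in> simplexS" and t: "t \<in> {0..1}"
    and J: "J t = -\<infinity> \<or> J t < ereal ?B" for x t
  proof (cases "J t = -\<infinity> \<or> (\<exists>i. t = x $ i)")
    case True then show ?thesis using F_MInfty[OF x t] by simp
  next
    case False
    then have "Jr t < ?B" using J by (cases "J t") auto
    moreover have "(\<Sum>i\<in>UNIV. kr i (t - x $ i)) \<le> (\<Sum>i\<in>(UNIV::'n set). MK)"
      by (rule sum_mono) (use MK False t x in blast)
    ultimately show ?thesis using F_finite_eq[OF x t] False by auto
  qed
  from bdry show ?thesis
  proof
    assume "J 0 = -\<infinity> \<and> (J \<longlongrightarrow> -\<infinity>) (at_right 0)"
    moreover obtain \<mu> where "\<mu> > 0" "\<forall>t. 0 < t \<longrightarrow> t < \<mu> \<longrightarrow> J t < ereal ?B"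
      using calculation J_small_near_0 by blast
    ultimately show ?thesis using small by (intro exI[of _ \<mu>]) (metis atLeastAtMost_iff order_le_less)
  next
    assume "J 1 = -\<infinity> \<and> (J \<longlongrightarrow> -\<infinity>) (at_left 1)"
    moreover obtain \<mu> where "\<mu> > 0" "\<forall>t. 1 - \<mu> < t \<longrightarrow> t < 1 \<longrightarrow> J t < ereal ?B"
      using calculation J_small_near_1 by blast
    ultimately show ?thesis using small by (intro exI[of _ \<mu>]) (metis atLeastAtMost_iff order_le_less)
  qed
qed

definition near_max :: "real^('n::{finite,linorder}) \<Rightarrow> nat \<Rightarrow> real \<Rightarrow> bool" where
  "near_max x j t \<longleftrightarrow> j \<le> CARD('n) \<and> t \<in> {ypt x j..ypt x (Suc j)} \<and> F x t > ereal (mr j x - 1)"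

lemma near_maxD:
  assumes x: "x \<in> simplexS" and nm: "near_max x j t"
  shows "j \<le> CARD('n)" "t \<in> {ypt x j..ypt x (Suc j)}" "t \<in> {0..1}" "J t \<noteq> -\<infinity>" "t \<noteq> x $ i"
    "F x t = ereal (Jr t + (\<Sum>i\<in>UNIV. kr i (t - x $ i)))"
proof -
  show j: "j \<le> CARD('n)" and t: "t \<in> {ypt x j..ypt x (Suc j)}" using nm unfolding near_max_def by auto
  show t01: "t \<in> {0..1}" using t ypt_range[OF x, of j] ypt_range[OF x, of "Suc j"] by auto
  have "F x t \<noteq> -\<infinity>" using nm unfolding near_max_def by auto
  then have c: "J t \<noteq> -\<infinity>" "\<And>i. t \<noteq> x $ i" using F_MInfty[OF x t01] by auto
  then show "J t \<noteq> -\<infinity>" "t \<noteq> x $ i" by auto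
  show "F x t = ereal (Jr t + (\<Sum>i\<in>UNIV. kr i (t - x $ i)))" using F_finite_eq[OF x t01] c by auto
qed

lemma mfun_realE:
  assumes "x \<in> simplexS" "mfun J K j x \<noteq> -\<infinity>"
  obtains r where "mfun J K j x = ereal r" "mr j x = r"
proof -
  obtain U where "mfun J K j x \<le> ereal U" using mfun_bounded_above assms(1) by blast
  then show ?thesis using that assms(2) by (cases "mfun J K j x") auto
qed

lemma near_max_F_lower:
  assumes x: "x \<in> simplexS" and nm: "near_max x j t" and L: "ereal L < mfun J K j x"
  shows "ereal (L - 1) < F x t"
proof -
  have "mfun J K j x \<noteq> -\<infinity>" using L by auto
  then obtain r where r: "mfun J K j x = ereal r" "mr j x = r" by (rule mfun_realE[OF x])
  then have "ereal (L - 1) < ereal (mr j x - 1)" using L by simp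
  then show ?thesis using nm unfolding near_max_def by (meson less_trans)
qed

lemma near_max_regular:
  "\<exists>\<mu>>0. \<mu> < 1 \<and>
     (\<forall>x\<in>simplexS. \<forall>j t i. near_max x j t \<longrightarrow> ereal L < mfun J K j x \<longrightarrow> \<mu> \<le> \<bar>t - x $ i\<bar>) \<and>
     ((\<forall>x\<in>simplexS. \<forall>j t. near_max x j t \<longrightarrow> ereal L < mfun J K j x \<longrightarrow> \<mu> \<le> t) \<or>
      (\<forall>x\<in>simplexS. \<forall>j t. near_max x j t \<longrightarrow> ereal L < mfun J K j x \<longrightarrow> t \<le> 1 - \<mu>))"
proof -
  obtain \<mu>1 where \<mu>1: "\<mu>1 > 0" "\<forall>x\<in>simplexS. \<forall>t\<in>{0..1}. \<forall>i. \<bar>t - x $ i\<bar> < \<mu>1 \<longrightarrow> F x t < ereal (L - 1)"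
    using F_small_near_singularity by blast
  obtain \<mu>2 where \<mu>2: "\<mu>2 > 0" and side: "(\<forall>x\<in>simplexS. \<forall>t\<in>{0..1}. t < \<mu>2 \<longrightarrow> F x t < ereal (L - 1)) \<or>
      (\<forall>x\<in>simplexS. \<forall>t\<in>{0..1}. 1 - \<mu>2 < t \<longrightarrow> F x t < ereal (L - 1))"
    using F_small_near_boundary by blast
  define \<mu> where "\<mu> = min (min \<mu>1 \<mu>2) (1/2)"
  have \<mu>: "0 < \<mu>" "\<mu> < 1" "\<mu> \<le> \<mu>1" "\<mu> \<le> \<mu>2" using \<mu>1 \<mu>2 unfolding \<mu>_def by auto
  have big: "t \<in> {0..1}" "\<not> F x t < ereal (L - 1)"
    if "x \<in> simplexS" "near_max x j t" "ereal L < mfun J K j x" for x j t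
    using near_maxD(3)[OF that(1,2)] near_max_F_lower[OF that] by auto
  have "\<mu> \<le> \<bar>t - x $ i\<bar>" if nm: "x \<in> simplexS" "near_max x j t" "ereal L < mfun J K j x" for x j t i
  proof (rule ccontr)
    assume "\<not> \<mu> \<le> \<bar>t - x $ i\<bar>"
    then have "\<bar>t - x $ i\<bar> < \<mu>1" using \<mu>(3) by linarith
    then show False using big[OF nm] \<mu>1(2) nm(1) by blast
  qed
  moreover from side
  have "(\<forall>x\<in>simplexS. \<forall>j t. near_max x j t \<longrightarrow> ereal L < mfun J K j x \<longrightarrow> \<mu> \<le> t) \<or>
      (\<forall>x\<in>simplexS. \<forall>j t. near_max x j t \<longrightarrow> ereal L < mfun J K j x \<longrightarrow> t \<le> 1 - \<mu>)"
  proof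
    assume small: "\<forall>x\<in>simplexS. \<forall>t\<in>{0..1}. t < \<mu>2 \<longrightarrow> F x t < ereal (L - 1)"
    have "\<mu> \<le> t" if nm: "x \<in> simplexS" "near_max x j t" "ereal L < mfun J K j x" for x j t
    proof (rule ccontr)
      assume "\<not> \<mu> \<le> t"
      then show False using big[OF nm] small nm(1) \<mu>(4) by force
    qed
    then show ?thesis by blast
  next
    assume small: "\<forall>x\<in>simplexS. \<forall>t\<in>{0..1}. 1 - \<mu>2 < t \<longrightarrow> F x t < ereal (L - 1)"
    have "t \<le> 1 - \<mu>" if nm: "x \<in> simplexS" "near_max x j t" "ereal L < mfun J K j x" for x j t
    proof (rule ccontr)
      assume "\<not> t \<le> 1 - \<mu>"
      then show False using big[OF nm] small nm(1) \<mu>(4) by force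
    qed
    then show ?thesis by blast
  qed
  ultimately show ?thesis using \<mu>(1,2) by blast
qed

lemma mfun_lower_near:
  assumes y: "y \<in> Yset J K" and j: "j \<le> CARD('n)"
  shows "\<exists>d>0. \<forall>x\<in>cube y d. x \<in> simplexS \<longrightarrow> ereal (mr j y - 2) < mfun J K j x"
proof -
  have ys: "y \<in> simplexS" and fin: "mfun J K j y \<noteq> -\<infinity>" using y j unfolding Yset_def by auto
  obtain r where "mfun J K j y = ereal r" "mr j y = r" using mfun_realE[OF ys fin] by blast
  then have "ereal (mr j y - 1) < mfun J K j y" by simp
  then obtain t where t: "t \<in> {ypt y j..ypt y (Suc j)}" and Fy: "ereal (mr j y - 1) < F y t"
    unfolding mfun_def less_SUP_iff by blast
  have t01: "t \<in> {0..1}" using t ypt_range[OF ys, of j] ypt_range[OF ys, of "Suc j"] by auto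
  have "F y t \<noteq> -\<infinity>" using Fy by auto
  then have Jt: "J t \<noteq> -\<infinity>" and ne: "\<And>i. t \<noteq> y $ i" using F_MInfty[OF ys t01] by auto
  have "\<exists>d>0. \<forall>i\<in>UNIV. d \<le> \<bar>t - y $ i\<bar>"
  proof (rule finite_common_pos_radius)
    fix i :: 'n
    show "\<exists>d>0. d \<le> \<bar>t - y $ i\<bar>" using ne[of i] by (intro exI[of _ "\<bar>t - y $ i\<bar>"]) auto
  qed auto
  then obtain \<gamma> where \<gamma>: "\<gamma> > 0" "\<forall>i\<in>UNIV. \<gamma> \<le> \<bar>t - y $ i\<bar>" by blast
  obtain e where e: "e > 0" and cont: "\<And>x. dist x y < e \<Longrightarrow>
      dist (\<Sum>i\<in>UNIV. kr i (t - x $ i)) (\<Sum>i\<in>UNIV. kr i (t - y $ i)) < 1"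
    using isCont_kernel_sum[OF ys t01 ne] unfolding continuous_at_eps_delta by (metis zero_less_one)
  show ?thesis
  proof (intro exI[of _ "min \<gamma> (e / CARD('n))"] conjI ballI impI)
    show "0 < min \<gamma> (e / CARD('n))" using \<gamma> e by simp
    fix x assume x: "x \<in> cube y (min \<gamma> (e / CARD('n)))" and xs: "x \<in> simplexS"
    have close: "\<bar>x $ i - y $ i\<bar> < \<bar>t - y $ i\<bar>" for i
    proof -
      have "\<bar>x $ i - y $ i\<bar> < \<gamma>" using x unfolding cube_def by auto
      also have "\<gamma> \<le> \<bar>t - y $ i\<bar>" using \<gamma>(2) by blast
      finally show ?thesis .
    qed
    have tx: "t \<in> {ypt x j..ypt x (Suc j)}" by (rule ypt_interval_perturb[OF ys j t close])
    have nex: "t \<noteq> x $ i" for i using close[of i] by auto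
    have "x \<in> cube y (e / CARD('n))" using x cube_mono[of "min \<gamma> (e / CARD('n))" "e / CARD('n)"] by auto
    then have "dist x y < e" using dist_lt_if_in_cube e by blast
    from cont[OF this] have "(\<Sum>i\<in>UNIV. kr i (t - y $ i)) - 1 < (\<Sum>i\<in>UNIV. kr i (t - x $ i))"
      by (auto simp: dist_real_def abs_less_iff)
    then have "ereal (mr j y - 2) < F x t"
      using Fy F_finite_eq[OF xs t01 Jt nex] F_finite_eq[OF ys t01 Jt ne] by auto
    also have "F x t \<le> mfun J K j x" unfolding mfun_def by (rule SUP_upper[OF tx])
    finally show "ereal (mr j y - 2) < mfun J K j x" .
  qed
qed

lemma mfun_lower_bound_near:
  assumes y: "y \<in> Yset J K"
  shows "\<exists>d>0. \<exists>L. \<forall>x\<in>cube y d. x \<in> simplexS \<longrightarrow> (\<forall>j\<le>CARD('n). ereal L < mfun J K j x)"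
proof -
  have "\<exists>d>0. \<forall>j\<in>{..CARD('n)}. \<forall>x\<in>cube y d. x \<in> simplexS \<longrightarrow> ereal (mr j y - 2) < mfun J K j x"
  proof (rule finite_common_pos_radius)
    fix j assume "j \<in> {..CARD('n)}"
    then show "\<exists>d>0. \<forall>x\<in>cube y d. x \<in> simplexS \<longrightarrow> ereal (mr j y - 2) < mfun J K j x"
      using mfun_lower_near[OF y] by simp
  next
    fix j d d' assume "\<forall>x\<in>cube y d. x \<in> simplexS \<longrightarrow> ereal (mr j y - 2) < mfun J K j x" "d' \<le> d"
    then show "\<forall>x\<in>cube y d'. x \<in> simplexS \<longrightarrow> ereal (mr j y - 2) < mfun J K j x"
      using cube_mono[of d' d y] by blast
  qed simp
  then obtain d where d: "d > 0"
    and low: "\<forall>j\<in>{..CARD('n)}. \<forall>x\<in>cube y d. x \<in> simplexS \<longrightarrow> ereal (mr j y - 2) < mfun J K j x"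
      by blast
  define L where "L = - (\<Sum>j\<le>CARD('n). \<bar>mr j y\<bar>) - 2"
  have "ereal L < mfun J K j x" if "x \<in> cube y d" "x \<in> simplexS" "j \<le> CARD('n)" for x j
  proof -
    have "\<bar>mr j y\<bar> \<le> (\<Sum>j\<le>CARD('n). \<bar>mr j y\<bar>)"
      by (rule member_le_sum) (use that(3) abs_ge_zero in blast)+
    then have "L \<le> mr j y - 2" unfolding L_def using abs_ge_minus_self[of "mr j y"] by linarith
    then show ?thesis using low that by (auto intro: le_less_trans[of "ereal L" "ereal (mr j y - 2)"])
  qed
  then show ?thesis using d by blast
qed

end

section \<open>Estimates on a cube around a point of \<open>Y\<close>\<close>

text \<open>The bound \<open>\<delta> \<le> \<mu>/8\<close> keeps two points of the cube within \<open>\<mu>/4\<close> of each other in every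
  coordinate, so a near-maximizer for one of them lies in the same interval, at distance at least
  \<open>3\<mu>/4\<close> from the singularities, for the other.\<close>

locale local_estimates = kernel_system K J for K :: "'n::{finite,linorder} \<Rightarrow> real \<Rightarrow> ereal" and J +
  fixes y0 :: "real^('n::{finite,linorder})" and \<delta> \<mu> \<mu>' :: real
  assumes const: "0 < \<delta>" "0 < \<mu>" "\<mu> < 1" "0 < \<mu>'" "\<mu>' < 1" "\<delta> \<le> \<mu>/8"
    and cube_ok: "\<And>x. x \<in> cube y0 \<delta> \<Longrightarrow> x \<in> simplexS \<and> (\<forall>i. \<mu>' \<le> x $ i \<and> x $ i \<le> 1 - \<mu>') \<and>
        (\<forall>j\<le>CARD('n). \<bar>mfun J K j x\<bar> \<noteq> \<infinity>)"
    and near_max_away: "\<And>x j t i. x \<in> cube y0 \<delta> \<Longrightarrow> near_max x j t \<Longrightarrow> \<mu> \<le> \<bar>t - x $ i\<bar>"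
    and near_max_side: "(\<forall>x\<in>cube y0 \<delta>. \<forall>j t. near_max x j t \<longrightarrow> \<mu> \<le> t) \<or>
      (\<forall>x\<in>cube y0 \<delta>. \<forall>j t. near_max x j t \<longrightarrow> t \<le> 1 - \<mu>)"

context kernel_system
begin

lemma exists_local_estimates:
  assumes y: "y \<in> Yset J K"
  shows "\<exists>\<delta> \<mu> \<mu>'. local_estimates K J y \<delta> \<mu> \<mu>'"
proof -
  obtain d1 \<mu>' where d1: "d1 > 0" "0 < \<mu>'" "\<mu>' < 1"
    and nbhd: "\<forall>x\<in>cube y d1. x \<in> simplexS \<and> (\<forall>i. \<mu>' \<le> x $ i \<and> x $ i \<le> 1 - \<mu>')"
    using simplexS_cube_nbhd y unfolding Yset_def by blast
  obtain d2 L where d2: "d2 > 0" and low: "\<forall>x\<in>cube y d2. x \<in> simplexS \<longrightarrow> (\<forall>j\<le>CARD('n). ereal L < mfun J K j x)"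
    using mfun_lower_bound_near[OF y] by blast
  obtain \<mu> where \<mu>: "0 < \<mu>" "\<mu> < 1"
    and away: "\<forall>x\<in>simplexS. \<forall>j t i. near_max x j t \<longrightarrow> ereal L < mfun J K j x \<longrightarrow> \<mu> \<le> \<bar>t - x $ i\<bar>"
    and side: "(\<forall>x\<in>simplexS. \<forall>j t. near_max x j t \<longrightarrow> ereal L < mfun J K j x \<longrightarrow> \<mu> \<le> t) \<or>
      (\<forall>x\<in>simplexS. \<forall>j t. near_max x j t \<longrightarrow> ereal L < mfun J K j x \<longrightarrow> t \<le> 1 - \<mu>)"
    using near_max_regular by blast
  obtain U where U: "\<forall>x\<in>simplexS. \<forall>j. mfun J K j x \<le> ereal U" using mfun_bounded_above by blast
  define \<delta> where "\<delta> = min (min d1 d2) (\<mu>/8)"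
  have \<delta>: "0 < \<delta>" "\<delta> \<le> \<mu>/8" using d1 d2 \<mu> unfolding \<delta>_def by auto
  have inner: "x \<in> simplexS \<and> (\<forall>i. \<mu>' \<le> x $ i \<and> x $ i \<le> 1 - \<mu>') \<and> (\<forall>j\<le>CARD('n). ereal L < mfun J K j x)"
    if "x \<in> cube y \<delta>" for x
  proof -
    have "\<delta> \<le> d1" "\<delta> \<le> d2" unfolding \<delta>_def by auto
    then have "x \<in> cube y d1" "x \<in> cube y d2" using that cube_mono by blast+
    then show ?thesis using nbhd low by blast
  qed
  have fin: "\<bar>mfun J K j x\<bar> \<noteq> \<infinity>" if "x \<in> cube y \<delta>" "j \<le> CARD('n)" for x j
  proof -
    have "ereal L < mfun J K j x" "mfun J K j x \<le> ereal U" using inner[OF that(1)] U that(2) by blast+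
    then show ?thesis by (cases "mfun J K j x") auto
  qed
  have "local_estimates K J y \<delta> \<mu> \<mu>'"
  proof unfold_locales
    show "0 < \<delta>" "0 < \<mu>" "\<mu> < 1" "0 < \<mu>'" "\<mu>' < 1" "\<delta> \<le> \<mu>/8" using \<delta> \<mu> d1 by auto
    show "x \<in> simplexS \<and> (\<forall>i. \<mu>' \<le> x $ i \<and> x $ i \<le> 1 - \<mu>') \<and> (\<forall>j\<le>CARD('n). \<bar>mfun J K j x\<bar> \<noteq> \<infinity>)"
      if "x \<in> cube y \<delta>" for x using inner[OF that] fin[OF that] by blast
    have lev: "x \<in> simplexS \<and> ereal L < mfun J K j x" if "x \<in> cube y \<delta>" "near_max x j t" for x j t
      using inner[OF that(1)] near_maxD(1)[OF _ that(2)] by blast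
    show "\<mu> \<le> \<bar>t - x $ i\<bar>" if "x \<in> cube y \<delta>" "near_max x j t" for x j t i
      using away lev[OF that] that(2) by blast
    show "(\<forall>x\<in>cube y \<delta>. \<forall>j t. near_max x j t \<longrightarrow> \<mu> \<le> t) \<or> (\<forall>x\<in>cube y \<delta>. \<forall>j t. near_max x j t \<longrightarrow> t \<le> 1 - \<mu>)"
      using side lev by blast
  qed
  then show ?thesis by blast
qed

end

context local_estimates
begin

lemma cubeD:
  assumes "x \<in> cube y0 \<delta>"
  shows "x \<in> simplexS" "\<mu>' \<le> x$i" "x$i \<le> 1 - \<mu>'"
    "j \<le> CARD('n) \<Longrightarrow> mfun J K j x = ereal (mr j x)"
  using cube_ok[OF assms] by (auto intro!: ereal_real'[symmetric])

lemma cube_close: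
  assumes "a \<in> cube y0 \<delta>" "b \<in> cube y0 \<delta>"
  shows "\<bar>a$i - b$i\<bar> < 2 * \<delta>"
proof -
  have "\<bar>a$i - y0$i\<bar> < \<delta>" "\<bar>b$i - y0$i\<bar> < \<delta>" using assms unfolding cube_def by auto
  then show ?thesis by (smt (verit))
qed

lemma near_max_sep:
  assumes x: "x \<in> cube y0 \<delta>" and nm: "near_max x j t"
  shows "idx_pos i < j \<Longrightarrow> x$i + \<mu> \<le> t" "j \<le> idx_pos i \<Longrightarrow> t \<le> x$i - \<mu>"
proof -
  have xs: "x \<in> simplexS" using cubeD[OF x] by auto
  have s: "idx_pos i < j \<Longrightarrow> x $ i \<le> t" "j \<le> idx_pos i \<Longrightarrow> t \<le> x $ i"
    using ypt_interval_side[OF xs near_maxD(1)[OF xs nm]] near_maxD(2)[OF xs nm] by auto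
  show "idx_pos i < j \<Longrightarrow> x$i + \<mu> \<le> t" "j \<le> idx_pos i \<Longrightarrow> t \<le> x$i - \<mu>"
    using s near_max_away[OF x nm, of i] by auto
qed

lemma near_max_exists:
  assumes x: "x \<in> cube y0 \<delta>" and j: "j \<le> CARD('n)" and eta: "0 < \<eta>" "\<eta> \<le> 1"
  shows "\<exists>t. near_max x j t \<and> F x t > ereal (mr j x - \<eta>)"
proof -
  obtain r where "mfun J K j x = ereal r" using cubeD(4)[OF x j] by blast
  then have "ereal (mr j x - \<eta>) < mfun J K j x" using eta by simp
  then obtain t where t: "t \<in> {ypt x j..ypt x (Suc j)}" "ereal (mr j x - \<eta>) < F x t"
    unfolding mfun_def less_SUP_iff by blast
  moreover have "ereal (mr j x - 1) \<le> ereal (mr j x - \<eta>)" using eta by simp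
  ultimately show ?thesis unfolding near_max_def using j by (blast intro: le_less_trans)
qed

definition kdiff :: "real^('n::{finite,linorder}) \<Rightarrow> real^('n::{finite,linorder}) \<Rightarrow> real \<Rightarrow> real" where
  "kdiff a b w = (\<Sum>i\<in>UNIV. kr i (w - b$i) - kr i (w - a$i))"

lemma near_max_transfer:
  assumes a: "a \<in> cube y0 \<delta>" and nm: "near_max a j w" and b: "b \<in> cube y0 \<delta>"
  shows "ereal (Jr w + (\<Sum>i\<in>UNIV. kr i (w - b $ i))) \<le> mfun J K j b"
proof -
  have as: "a \<in> simplexS" and bs: "b \<in> simplexS" using cubeD a b by auto
  have close: "\<bar>b $ i - a $ i\<bar> < \<bar>w - a $ i\<bar>" for i
    using cube_close[OF b a, of i] near_max_away[OF a nm, of i] const by linarith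
  have w: "w \<in> {ypt b j..ypt b (Suc j)}"
    by (rule ypt_interval_perturb[OF as near_maxD(1,2)[OF as nm] close])
  have "F b w = ereal (Jr w + (\<Sum>i\<in>UNIV. kr i (w - b $ i)))"
    using F_finite_eq[OF bs near_maxD(3,4)[OF as nm]] close by (metis less_irrefl)
  moreover have "F b w \<le> mfun J K j b" unfolding mfun_def by (rule SUP_upper[OF w])
  ultimately show ?thesis by simp
qed

lemma m_diff_lower:
  assumes a: "a \<in> cube y0 \<delta>" and nm: "near_max a j w" and eta: "F a w > ereal (mr j a - \<eta>)"
    and b: "b \<in> cube y0 \<delta>"
  shows "mr j b - mr j a > kdiff a b w - \<eta>"
proof -
  have as: "a \<in> simplexS" using cubeD a by auto
  have j: "j \<le> CARD('n)" using near_maxD(1)[OF as nm] .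
  have "ereal (Jr w + (\<Sum>i\<in>UNIV. kr i (w - b $ i))) \<le> ereal (mr j b)"
    using near_max_transfer[OF a nm b] cubeD(4)[OF b j] by simp
  then have "Jr w + (\<Sum>i\<in>UNIV. kr i (w - b $ i)) \<le> mr j b" by simp
  moreover have "Jr w + (\<Sum>i\<in>UNIV. kr i (w - a $ i)) > mr j a - \<eta>"
    using eta near_maxD(6)[OF as nm] by simp
  moreover have "kdiff a b w = (\<Sum>i\<in>UNIV. kr i (w - b $ i)) - (\<Sum>i\<in>UNIV. kr i (w - a $ i))"
    unfolding kdiff_def by (simp add: sum_subtractf)
  ultimately show ?thesis by linarith
qed

lemma kdiff_swap: "kdiff b a w = - kdiff a b w"
  unfolding kdiff_def by (simp add: sum_negf[symmetric])

lemma m_diff_upper: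
  assumes b: "b \<in> cube y0 \<delta>" and nm: "near_max b j w" and eta: "F b w > ereal (mr j b - \<eta>)"
    and a: "a \<in> cube y0 \<delta>"
  shows "mr j b - mr j a < kdiff a b w + \<eta>"
  using m_diff_lower[OF b nm eta a] kdiff_swap[of a b w] by linarith

definition kslope :: "real^('n::{finite,linorder}) \<Rightarrow> real^('n::{finite,linorder}) \<Rightarrow> ('n::{finite,linorder}) \<Rightarrow> real \<Rightarrow> real" where
  "kslope a b i w = chord_slope (kr i) (w - a$i) (w - b$i)"

lemma kdiff_eq_kslope: "kdiff a b w = (\<Sum>i\<in>UNIV. (a$i - b$i) * kslope a b i w)"
  unfolding kdiff_def
proof (rule sum.cong[OF refl])
  fix i
  show "kr i (w - b $ i) - kr i (w - a $ i) = (a $ i - b $ i) * kslope a b i w"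
  proof (cases "a$i = b$i")
    case True then show ?thesis by simp
  next
    case False
    then show ?thesis unfolding kslope_def chord_slope_def by (simp add: divide_simps algebra_simps)
  qed
qed

definition near_max_pair :: "real^('n::{finite,linorder}) \<Rightarrow> real^('n::{finite,linorder}) \<Rightarrow> nat \<Rightarrow> real \<Rightarrow> bool" where
  "near_max_pair a b j w \<longleftrightarrow> near_max a j w \<or> near_max b j w"

lemma near_max_pair_side:
  assumes a: "a \<in> cube y0 \<delta>" and b: "b \<in> cube y0 \<delta>" and nm: "near_max_pair a b j w"
  shows "idx_pos i < j \<Longrightarrow> 3*\<mu>/4 \<le> w - a$i \<and> 3*\<mu>/4 \<le> w - b$i"
    "j \<le> idx_pos i \<Longrightarrow> w - a$i \<le> -3*\<mu>/4 \<and> w - b$i \<le> -3*\<mu>/4"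
    "-1 + \<mu>' \<le> w - a$i" "w - a$i \<le> 1 - \<mu>'" "-1 + \<mu>' \<le> w - b$i" "w - b$i \<le> 1 - \<mu>'"
    "0 \<le> w" "w \<le> 1"
proof -
  obtain x where x: "x \<in> cube y0 \<delta>" "near_max x j w" and xab: "x = a \<or> x = b"
    using nm a b unfolding near_max_pair_def by blast
  have cl: "x$i - \<mu>/4 < a$i" "a$i < x$i + \<mu>/4" "x$i - \<mu>/4 < b$i" "b$i < x$i + \<mu>/4"
    using xab cube_close[OF a b, of i] cube_close[OF b a, of i] const by (auto simp: abs_less_iff)
  have ab: "\<mu>' \<le> a$i" "a$i \<le> 1 - \<mu>'" "\<mu>' \<le> b$i" "b$i \<le> 1 - \<mu>'" using cubeD[OF a] cubeD[OF b] by auto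
  have "w \<in> {0..1}" using near_maxD(3)[OF cubeD(1)[OF x(1)] x(2)] .
  then show "0 \<le> w" "w \<le> 1"
    "-1 + \<mu>' \<le> w - a$i" "w - a$i \<le> 1 - \<mu>'" "-1 + \<mu>' \<le> w - b$i" "w - b$i \<le> 1 - \<mu>'"
    using ab by auto
  show "idx_pos i < j \<Longrightarrow> 3*\<mu>/4 \<le> w - a$i \<and> 3*\<mu>/4 \<le> w - b$i"
    using near_max_sep(1)[OF x, of i] cl by auto
  show "j \<le> idx_pos i \<Longrightarrow> w - a$i \<le> -3*\<mu>/4 \<and> w - b$i \<le> -3*\<mu>/4"
    using near_max_sep(2)[OF x, of i] cl by auto
qed

lemma near_max_pair_order:
  assumes a: "a \<in> cube y0 \<delta>" and b: "b \<in> cube y0 \<delta>" and m: "m < CARD('n)"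
    and w: "near_max_pair a b m w" and w': "near_max_pair a b (Suc m) w'"
  shows "w \<le> w'"
proof -
  define k :: 'n where "k = idx_of (Suc m)"
  have pk: "idx_pos k = m" unfolding k_def using idx_pos_idx_of[where 'n='n, of "Suc m"] m by auto
  have "w - a$k \<le> -3*\<mu>/4" using near_max_pair_side(2)[OF a b w, of k] pk by auto
  moreover have "3*\<mu>/4 \<le> w' - a$k" using near_max_pair_side(1)[OF a b w', of k] pk by auto
  ultimately show ?thesis using const by linarith
qed

lemma kslope_antimono:
  assumes a: "a \<in> cube y0 \<delta>" and b: "b \<in> cube y0 \<delta>" and m: "m < CARD('n)"
    and w: "near_max_pair a b m w" and w': "near_max_pair a b (Suc m) w'" and mi: "m \<noteq> idx_pos i"
  shows "kslope a b i w' \<le> kslope a b i w"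
proof (cases "a$i = b$i")
  case True then show ?thesis unfolding kslope_def chord_slope_def by simp
next
  case False
  have ww: "w \<le> w'" by (rule near_max_pair_order[OF a b m w w'])
  define h where "h = a$i - b$i"
  have h: "h \<noteq> 0" using False unfolding h_def by simp
  have e: "w - b$i = (w - a$i) + h" "w' - b$i = (w' - a$i) + h" unfolding h_def by auto
  show ?thesis
  proof (cases "m < idx_pos i")
    case True
    then have s1: "w - a$i \<le> -3*\<mu>/4 \<and> w - b$i \<le> -3*\<mu>/4" "w' - a$i \<le> -3*\<mu>/4 \<and> w' - b$i \<le> -3*\<mu>/4"
      using near_max_pair_side(2)[OF a b w, of i] near_max_pair_side(2)[OF a b w', of i] by auto
    have s2: "-1 + \<mu>' \<le> w - a$i" "-1 + \<mu>' \<le> w - b$i" "-1 + \<mu>' \<le> w' - a$i" "-1 + \<mu>' \<le> w' - b$i"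
      using near_max_pair_side(3,5)[OF a b w, of i] near_max_pair_side(3,5)[OF a b w', of i] by auto
    have "chord_slope (kr i) (w - a$i) ((w - a$i) + h) \<ge> chord_slope (kr i) (w' - a$i) ((w' - a$i) + h)"
      by (rule concave_on_chord_slope_shift_antimono[OF kr_concave_neg]) (use ww h s1 s2 e const in auto)
    then show ?thesis unfolding kslope_def e by simp
  next
    case False
    then have lt: "idx_pos i < m" using mi by simp
    then have s1: "3*\<mu>/4 \<le> w - a$i \<and> 3*\<mu>/4 \<le> w - b$i" "3*\<mu>/4 \<le> w' - a$i \<and> 3*\<mu>/4 \<le> w' - b$i"
      using near_max_pair_side(1)[OF a b w, of i] near_max_pair_side(1)[OF a b w', of i] by auto
    have s2: "w - a$i \<le> 1 - \<mu>'" "w - b$i \<le> 1 - \<mu>'" "w' - a$i \<le> 1 - \<mu>'" "w' - b$i \<le> 1 - \<mu>'"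
      using near_max_pair_side(4,6)[OF a b w, of i] near_max_pair_side(4,6)[OF a b w', of i] by auto
    have "chord_slope (kr i) (w - a$i) ((w - a$i) + h) \<ge> chord_slope (kr i) (w' - a$i) ((w' - a$i) + h)"
      by (rule concave_on_chord_slope_shift_antimono[OF kr_concave_pos]) (use ww h s1 s2 e const in auto)
    then show ?thesis unfolding kslope_def e by simp
  qed
qed

lemma kslope_gap_across_exists:
  "\<exists>\<epsilon>>0. \<forall>a\<in>cube y0 \<delta>. \<forall>b\<in>cube y0 \<delta>. \<forall>i w0 wn. near_max_pair a b 0 w0 \<longrightarrow>
     near_max_pair a b CARD('n) wn \<longrightarrow> a$i \<noteq> b$i \<longrightarrow> kslope a b i wn \<ge> kslope a b i w0 + \<epsilon>"
proof -
  have "\<exists>\<epsilon>>0. \<forall>i\<in>UNIV. \<forall>p q h. h \<noteq> 0 \<longrightarrow> \<bar>h\<bar> \<le> \<mu>/4 \<longrightarrow> p \<le> -\<mu>/2 \<longrightarrow> p + h \<le> -\<mu>/2 \<longrightarrow>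
      \<mu>/2 \<le> q \<longrightarrow> \<mu>/2 \<le> q + h \<longrightarrow> q < 1 \<longrightarrow> q + h < 1 \<longrightarrow> q - p \<le> 1 - \<mu> \<longrightarrow>
      chord_slope (kr i) q (q + h) \<ge> chord_slope (kr i) p (p + h) + \<epsilon>"
    by (rule finite_common_pos_radius)
      (simp, use PM0_chord_slope_gap[OF kr_concave_neg kr_concave_pos kr_strictly_concave_neg kr_PM0 const(2,3)]
        in blast, smt (verit))
  then obtain \<epsilon> where \<epsilon>: "\<epsilon> > 0" and gap: "\<And>i p q h. h \<noteq> 0 \<Longrightarrow> \<bar>h\<bar> \<le> \<mu>/4 \<Longrightarrow> p \<le> -\<mu>/2 \<Longrightarrow>
      p + h \<le> -\<mu>/2 \<Longrightarrow> \<mu>/2 \<le> q \<Longrightarrow> \<mu>/2 \<le> q + h \<Longrightarrow> q < 1 \<Longrightarrow> q + h < 1 \<Longrightarrow> q - p \<le> 1 - \<mu> \<Longrightarrow>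
      chord_slope (kr i) q (q + h) \<ge> chord_slope (kr i) p (p + h) + \<epsilon>"
    by blast
  have "kslope a b i wn \<ge> kslope a b i w0 + \<epsilon>"
    if a: "a \<in> cube y0 \<delta>" and b: "b \<in> cube y0 \<delta>" and w0: "near_max_pair a b 0 w0"
      and wn: "near_max_pair a b CARD('n) wn" and ne: "a$i \<noteq> b$i" for a b i w0 wn
  proof -
    define h where "h = a$i - b$i"
    define p where "p = w0 - a$i"
    define q where "q = wn - a$i"
    have cl: "\<bar>a$i - b$i\<bar> < 2 * \<delta>" using cube_close[OF a b] .
    have e: "w0 - b$i = p + h" "wn - b$i = q + h" unfolding h_def p_def q_def by auto
    have s0: "p \<le> -3*\<mu>/4" "p + h \<le> -3*\<mu>/4"
      using near_max_pair_side(2)[OF a b w0, of i] e unfolding p_def by auto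
    have sn: "3*\<mu>/4 \<le> q" "3*\<mu>/4 \<le> q + h"
      using near_max_pair_side(1)[OF a b wn, of i] idx_pos_lt e unfolding q_def by auto
    have sn1: "q < 1" "q + h < 1" using near_max_pair_side(4,6)[OF a b wn, of i] e const unfolding q_def by auto
    have "0 \<le> w0" "wn \<le> 1" using near_max_pair_side(7)[OF a b w0] near_max_pair_side(8)[OF a b wn] by auto
    moreover have "\<mu> \<le> w0 \<or> wn \<le> 1 - \<mu>"
      using near_max_side w0 wn a b unfolding near_max_pair_def by blast
    ultimately have qp: "q - p \<le> 1 - \<mu>" unfolding p_def q_def by auto
    have "chord_slope (kr i) q (q + h) \<ge> chord_slope (kr i) p (p + h) + \<epsilon>"
      by (rule gap) (use ne cl const s0 sn sn1 qp in \<open>auto simp: h_def\<close>)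
    then show ?thesis unfolding kslope_def e p_def[symmetric] q_def[symmetric] by simp
  qed
  then show ?thesis using \<epsilon> by blast
qed

definition kslope_gap :: real where
  "kslope_gap = (SOME \<epsilon>. \<epsilon> > 0 \<and> (\<forall>a\<in>cube y0 \<delta>. \<forall>b\<in>cube y0 \<delta>. \<forall>i w0 wn. near_max_pair a b 0 w0 \<longrightarrow>
     near_max_pair a b CARD('n) wn \<longrightarrow> a$i \<noteq> b$i \<longrightarrow> kslope a b i wn \<ge> kslope a b i w0 + \<epsilon>))"

lemma kslope_gap_pos: "kslope_gap > 0"
  and kslope_gap_across: "a \<in> cube y0 \<delta> \<Longrightarrow> b \<in> cube y0 \<delta> \<Longrightarrow> near_max_pair a b 0 w0 \<Longrightarrow>
    near_max_pair a b CARD('n) wn \<Longrightarrow> a$i \<noteq> b$i \<Longrightarrow> kslope a b i wn \<ge> kslope a b i w0 + kslope_gap"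
  using someI_ex[OF kslope_gap_across_exists, folded kslope_gap_def] by blast+

lemma kslope_bounded_exists:
  "\<exists>M\<ge>0. \<forall>a\<in>cube y0 \<delta>. \<forall>b\<in>cube y0 \<delta>. \<forall>i j w. near_max_pair a b j w \<longrightarrow> \<bar>kslope a b i w\<bar> \<le> M"
proof -
  have "\<exists>M. \<forall>u v. -1 + \<mu>' \<le> u \<longrightarrow> u \<le> -\<mu>/2 \<longrightarrow> -1 + \<mu>' \<le> v \<longrightarrow> v \<le> -\<mu>/2 \<longrightarrow> \<bar>chord_slope (kr i) u v\<bar> \<le> M" for i
    by (rule concave_on_chord_slope_bounded[OF kr_concave_neg]) (use const in auto)
  then obtain M1 where M1: "\<And>i u v. -1 + \<mu>' \<le> u \<Longrightarrow> u \<le> -\<mu>/2 \<Longrightarrow> -1 + \<mu>' \<le> v \<Longrightarrow> v \<le> -\<mu>/2 \<Longrightarrow>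
      \<bar>chord_slope (kr i) u v\<bar> \<le> M1 i"
    by metis
  have "\<exists>M. \<forall>u v. \<mu>/2 \<le> u \<longrightarrow> u \<le> 1 - \<mu>' \<longrightarrow> \<mu>/2 \<le> v \<longrightarrow> v \<le> 1 - \<mu>' \<longrightarrow> \<bar>chord_slope (kr i) u v\<bar> \<le> M" for i
    by (rule concave_on_chord_slope_bounded[OF kr_concave_pos]) (use const in auto)
  then obtain M2 where M2: "\<And>i u v. \<mu>/2 \<le> u \<Longrightarrow> u \<le> 1 - \<mu>' \<Longrightarrow> \<mu>/2 \<le> v \<Longrightarrow> v \<le> 1 - \<mu>' \<Longrightarrow>
      \<bar>chord_slope (kr i) u v\<bar> \<le> M2 i"
    by metis
  define M where "M = (\<Sum>i\<in>UNIV. \<bar>M1 i\<bar> + \<bar>M2 i\<bar>)"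
  have le: "\<bar>M1 i\<bar> + \<bar>M2 i\<bar> \<le> M" for i unfolding M_def by (rule member_le_sum) auto
  have "\<bar>kslope a b i w\<bar> \<le> M"
    if a: "a \<in> cube y0 \<delta>" and b: "b \<in> cube y0 \<delta>" and w: "near_max_pair a b j w" for a b i j w
  proof (cases "idx_pos i < j")
    case True
    then have "\<mu>/2 \<le> w - a$i" "w - a$i \<le> 1 - \<mu>'" "\<mu>/2 \<le> w - b$i" "w - b$i \<le> 1 - \<mu>'"
      using near_max_pair_side(1,4,6)[OF a b w, of i] const by auto
    then show ?thesis using M2[of "w - a$i" "w - b$i" i] le[of i] unfolding kslope_def by auto
  next
    case False
    then have "-1 + \<mu>' \<le> w - a$i" "w - a$i \<le> -\<mu>/2" "-1 + \<mu>' \<le> w - b$i" "w - b$i \<le> -\<mu>/2"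
      using near_max_pair_side(2,3,5)[OF a b w, of i] const by auto
    then show ?thesis using M1[of "w - a$i" "w - b$i" i] le[of i] unfolding kslope_def by auto
  qed
  moreover have "M \<ge> 0" unfolding M_def by (intro sum_nonneg) auto
  ultimately show ?thesis by blast
qed

definition kslope_bound :: real where
  "kslope_bound = (SOME M. M \<ge> 0 \<and>
     (\<forall>a\<in>cube y0 \<delta>. \<forall>b\<in>cube y0 \<delta>. \<forall>i j w. near_max_pair a b j w \<longrightarrow> \<bar>kslope a b i w\<bar> \<le> M))"

lemma kslope_bound_nonneg: "kslope_bound \<ge> 0"
  and kslope_bounded: "a \<in> cube y0 \<delta> \<Longrightarrow> b \<in> cube y0 \<delta> \<Longrightarrow> near_max_pair a b j w \<Longrightarrow>
    \<bar>kslope a b i w\<bar> \<le> kslope_bound"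
  using someI_ex[OF kslope_bounded_exists, folded kslope_bound_def] by blast+

lemma m_diff_weighted_lower:
  assumes a: "a \<in> cube y0 \<delta>" and b: "b \<in> cube y0 \<delta>" and j: "j \<le> CARD('n)" and eta: "0 < \<eta>" "\<eta> \<le> 1"
  shows "\<exists>w. near_max_pair a b j w \<and> c * kdiff a b w - \<bar>c\<bar> * \<eta> \<le> c * (mr j b - mr j a)"
proof (cases "c \<ge> 0")
  case True
  obtain w where w: "near_max a j w" "F a w > ereal (mr j a - \<eta>)" using near_max_exists[OF a j eta] by blast
  have "mr j b - mr j a > kdiff a b w - \<eta>" by (rule m_diff_lower[OF a w b])
  then have "c * (kdiff a b w - \<eta>) \<le> c * (mr j b - mr j a)" using True by (intro mult_left_mono) auto
  then show ?thesis using w True unfolding near_max_pair_def by (intro exI[of _ w]) (auto simp: algebra_simps)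
next
  case False
  obtain w where w: "near_max b j w" "F b w > ereal (mr j b - \<eta>)" using near_max_exists[OF b j eta] by blast
  have "mr j b - mr j a < kdiff a b w + \<eta>" by (rule m_diff_upper[OF b w a])
  then have "c * (kdiff a b w + \<eta>) \<le> c * (mr j b - mr j a)" using False by (intro mult_left_mono_neg) auto
  then show ?thesis using w False unfolding near_max_pair_def by (intro exI[of _ w]) (auto simp: algebra_simps)
qed

lemma Phi_diff_weighted_lower:
  assumes a: "a \<in> cube y0 \<delta>" and b: "b \<in> cube y0 \<delta>" and tau: "\<And>i. \<bar>\<tau> i\<bar> \<le> 1"
    and eta: "0 < \<eta>" "\<eta> \<le> 1"
  shows "\<exists>w. (\<forall>j\<le>CARD('n). near_max_pair a b j (w j)) \<and>
    (\<Sum>m<CARD('n). \<tau> (idx_of (Suc m)) * (kdiff a b (w (Suc m)) - kdiff a b (w m))) - 2 * (real CARD('n) + 1) * \<eta>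
      \<le> (\<Sum>i\<in>UNIV. \<tau> i * (Phi J K b $ i - Phi J K a $ i))"
proof -
  let ?n = "CARD('n)"
  define e where "e j = idx_weight \<tau> j - idx_weight \<tau> (Suc j)" for j
  have wb: "\<bar>idx_weight \<tau> j\<bar> \<le> 1" for j unfolding idx_weight_def using tau by auto
  have eb: "\<bar>e j\<bar> \<le> 2" for j using wb[of j] wb[of "Suc j"] unfolding e_def by (auto simp: abs_le_iff)
  have "\<exists>w. near_max_pair a b j w \<and> e j * kdiff a b w - 2 * \<eta> \<le> e j * (mr j b - mr j a)" if j: "j \<le> ?n" for j
  proof -
    obtain w where "near_max_pair a b j w" "e j * kdiff a b w - \<bar>e j\<bar> * \<eta> \<le> e j * (mr j b - mr j a)"
      using m_diff_weighted_lower[OF a b j eta] by blast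
    moreover have "\<bar>e j\<bar> * \<eta> \<le> 2 * \<eta>" using eb[of j] eta by (intro mult_right_mono) auto
    ultimately show ?thesis by (intro exI[of _ w]) auto
  qed
  then obtain w where w: "\<And>j. j \<le> ?n \<Longrightarrow> near_max_pair a b j (w j) \<and>
      e j * kdiff a b (w j) - 2 * \<eta> \<le> e j * (mr j b - mr j a)"
    by metis
  have "(\<Sum>j\<le>?n. e j * kdiff a b (w j)) - 2 * (real ?n + 1) * \<eta> = (\<Sum>j\<le>?n. e j * kdiff a b (w j) - 2 * \<eta>)"
    by (simp add: sum_subtractf algebra_simps)
  also have "\<dots> \<le> (\<Sum>j\<le>?n. e j * (mr j b - mr j a))" by (rule sum_mono) (use w in auto)
  finally have le: "(\<Sum>j\<le>?n. e j * kdiff a b (w j)) - 2 * (real ?n + 1) * \<eta> \<le> (\<Sum>j\<le>?n. e j * (mr j b - mr j a))" .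
  have "(\<Sum>m<?n. \<tau> (idx_of (Suc m)) * (kdiff a b (w (Suc m)) - kdiff a b (w m))) = (\<Sum>j\<le>?n. e j * kdiff a b (w j))"
    using sum_idx_weight_by_parts[of \<tau> "\<lambda>j. kdiff a b (w j)"] unfolding e_def by simp
  moreover have "(\<Sum>i\<in>UNIV. \<tau> i * (Phi J K b $ i - Phi J K a $ i)) = (\<Sum>j\<le>?n. e j * (mr j b - mr j a))"
    using sum_Phi_diff_by_parts[of \<tau> J K b a] unfolding e_def by simp
  ultimately show ?thesis using w le by (intro exI[of _ w]) auto
qed

lemma kdiff_diff: "kdiff a b w' - kdiff a b w = (\<Sum>i\<in>UNIV. (a$i - b$i) * (kslope a b i w' - kslope a b i w))"
  unfolding kdiff_eq_kslope by (simp add: sum_subtractf[symmetric] algebra_simps)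

lemma kdiff_chain_eq:
  "(\<Sum>m<CARD('n). c m * (kdiff a b (w (Suc m)) - kdiff a b (w m))) =
    (\<Sum>i\<in>UNIV. \<Sum>m<CARD('n). (c m * (a$i - b$i)) * (kslope a b i (w (Suc m)) - kslope a b i (w m)))"
proof -
  have "(\<Sum>m<CARD('n). c m * (kdiff a b (w (Suc m)) - kdiff a b (w m))) =
      (\<Sum>m<CARD('n). \<Sum>i\<in>UNIV. c m * ((a$i - b$i) * (kslope a b i (w (Suc m)) - kslope a b i (w m))))"
    unfolding kdiff_diff by (simp add: sum_distrib_left)
  also have "\<dots> = (\<Sum>i\<in>UNIV. \<Sum>m<CARD('n). c m * ((a$i - b$i) * (kslope a b i (w (Suc m)) - kslope a b i (w m))))"
    by (rule sum.swap)
  finally show ?thesis by (simp add: mult.assoc)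
qed

text \<open>Along a chain of near-maximizers only the step crossing \<open>a$i\<close> can increase \<open>kslope a b i\<close>,
  while the whole chain gains at least \<open>kslope_gap\<close>; a weight that is extremal at that step
  therefore collects the whole gain.\<close>

lemma kslope_chain_gain:
  assumes a: "a \<in> cube y0 \<delta>" and b: "b \<in> cube y0 \<delta>" and w: "\<And>j. j \<le> CARD('n) \<Longrightarrow> near_max_pair a b j (w j)"
    and tau: "\<And>k. \<bar>\<tau> k\<bar> \<le> 1" and tau_i: "\<tau> i = - sgn (b$i - a$i)"
  shows "kslope_gap * \<bar>b$i - a$i\<bar> \<le>
    (\<Sum>m<CARD('n). (\<tau> (idx_of (Suc m)) * (a$i - b$i)) * (kslope a b i (w (Suc m)) - kslope a b i (w m)))"
proof -
  let ?n = "CARD('n)"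
  define dl where "dl m = kslope a b i (w (Suc m)) - kslope a b i (w m)" for m
  have cp: "\<tau> (idx_of (Suc (idx_pos i))) * (a$i - b$i) = \<bar>b$i - a$i\<bar>"
    using idx_of_idx_pos[of i] tau_i by (auto simp: sgn_if)
  have cb: "\<bar>\<tau> (idx_of (Suc m)) * (a$i - b$i)\<bar> \<le> \<bar>b$i - a$i\<bar>" for m
    using mult_left_le_one_le[of "\<bar>b$i - a$i\<bar>" "\<bar>\<tau> (idx_of (Suc m))\<bar>"] tau
    by (simp add: abs_mult abs_minus_commute)
  have dn: "dl m \<le> 0" if "m < ?n" "m \<noteq> idx_pos i" for m
    unfolding dl_def using kslope_antimono[OF a b that(1) w w that(2)] that by auto
  have "\<bar>b$i - a$i\<bar> * (\<Sum>m<?n. dl m) \<le> (\<Sum>m<?n. (\<tau> (idx_of (Suc m)) * (a$i - b$i)) * dl m)"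
    by (rule sum_weighted_ge[where coef = "\<lambda>m. \<tau> (idx_of (Suc m)) * (a$i - b$i)" and d = dl,
          OF idx_pos_lt cp]) (use cb dn in auto)
  moreover have "(\<Sum>m<?n. dl m) = kslope a b i (w ?n) - kslope a b i (w 0)"
    unfolding dl_def by (rule sum_lessThan_telescope)
  moreover have "\<bar>b$i - a$i\<bar> * kslope_gap \<le> \<bar>b$i - a$i\<bar> * (kslope a b i (w ?n) - kslope a b i (w 0))"
  proof (cases "a$i = b$i")
    case False
    have "kslope a b i (w ?n) \<ge> kslope a b i (w 0) + kslope_gap" by (rule kslope_gap_across[OF a b w w False]) auto
    then show ?thesis by (intro mult_left_mono) auto
  qed simp
  ultimately show ?thesis unfolding dl_def by (simp add: mult.commute)
qed

lemma Phi_diff_l1_lower: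
  assumes a: "a \<in> cube y0 \<delta>" and b: "b \<in> cube y0 \<delta>"
  shows "kslope_gap * (\<Sum>i\<in>UNIV. \<bar>b$i - a$i\<bar>) \<le> (\<Sum>i\<in>UNIV. \<bar>Phi J K b $ i - Phi J K a $ i\<bar>)"
proof (rule le_of_le_plus_eta[of "2 * (real CARD('n) + 1)"])
  fix \<eta> :: real assume eta: "0 < \<eta>" "\<eta> \<le> 1"
  let ?n = "CARD('n)"
  define \<tau> where "\<tau> i = - sgn (b$i - a$i)" for i
  have tau: "\<bar>\<tau> i\<bar> \<le> 1" for i unfolding \<tau>_def by (simp add: sgn_if)
  obtain w where w: "\<And>j. j \<le> ?n \<Longrightarrow> near_max_pair a b j (w j)"
    and ineq: "(\<Sum>m<?n. \<tau> (idx_of (Suc m)) * (kdiff a b (w (Suc m)) - kdiff a b (w m))) - 2 * (real ?n + 1) * \<eta>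
      \<le> (\<Sum>i\<in>UNIV. \<tau> i * (Phi J K b $ i - Phi J K a $ i))"
    using Phi_diff_weighted_lower[OF a b, of \<tau> \<eta>, OF tau eta] by (elim exE conjE) auto
  have "kslope_gap * (\<Sum>i\<in>UNIV. \<bar>b$i - a$i\<bar>) \<le>
      (\<Sum>i\<in>UNIV. \<Sum>m<?n. (\<tau> (idx_of (Suc m)) * (a$i - b$i)) * (kslope a b i (w (Suc m)) - kslope a b i (w m)))"
    unfolding sum_distrib_left by (rule sum_mono) (rule kslope_chain_gain[OF a b w tau], auto simp: \<tau>_def)
  also have "\<dots> = (\<Sum>m<?n. \<tau> (idx_of (Suc m)) * (kdiff a b (w (Suc m)) - kdiff a b (w m)))"
    using kdiff_chain_eq[of "\<lambda>m. \<tau> (idx_of (Suc m))" a b w] by simp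
  finally have gain: "kslope_gap * (\<Sum>i\<in>UNIV. \<bar>b$i - a$i\<bar>) \<le>
      (\<Sum>m<?n. \<tau> (idx_of (Suc m)) * (kdiff a b (w (Suc m)) - kdiff a b (w m)))" .
  have "\<tau> i * (Phi J K b $ i - Phi J K a $ i) \<le> \<bar>Phi J K b $ i - Phi J K a $ i\<bar>" for i
  proof -
    have "\<tau> i * (Phi J K b $ i - Phi J K a $ i) \<le> \<bar>\<tau> i * (Phi J K b $ i - Phi J K a $ i)\<bar>" by simp
    also have "\<dots> \<le> \<bar>Phi J K b $ i - Phi J K a $ i\<bar>" using tau[of i] by (simp add: abs_mult mult_left_le_one_le)
    finally show ?thesis .
  qed
  then have "(\<Sum>i\<in>UNIV. \<tau> i * (Phi J K b $ i - Phi J K a $ i)) \<le> (\<Sum>i\<in>UNIV. \<bar>Phi J K b $ i - Phi J K a $ i\<bar>)"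
    by (rule sum_mono)
  with gain show "kslope_gap * (\<Sum>i\<in>UNIV. \<bar>b$i - a$i\<bar>) - 2 * (real ?n + 1) * \<eta> \<le> (\<Sum>i\<in>UNIV. \<bar>Phi J K b $ i - Phi J K a $ i\<bar>)"
    using ineq by linarith
qed simp

lemma kdiff_bound:
  assumes a: "a \<in> cube y0 \<delta>" and b: "b \<in> cube y0 \<delta>" and w: "near_max_pair a b j w"
  shows "\<bar>kdiff a b w\<bar> \<le> kslope_bound * (\<Sum>i\<in>UNIV. \<bar>b$i - a$i\<bar>)"
proof -
  have "\<bar>kdiff a b w\<bar> \<le> (\<Sum>i\<in>UNIV. \<bar>(a$i - b$i) * kslope a b i w\<bar>)" unfolding kdiff_eq_kslope
    by (rule sum_abs)
  also have "\<dots> \<le> (\<Sum>i\<in>UNIV. \<bar>b$i - a$i\<bar> * kslope_bound)"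
  proof (rule sum_mono)
    fix i
    have "\<bar>kslope a b i w\<bar> \<le> kslope_bound" by (rule kslope_bounded[OF a b w])
    then show "\<bar>(a$i - b$i) * kslope a b i w\<bar> \<le> \<bar>b$i - a$i\<bar> * kslope_bound"
      by (simp add: abs_mult abs_minus_commute mult_left_mono)
  qed
  also have "\<dots> = kslope_bound * (\<Sum>i\<in>UNIV. \<bar>b$i - a$i\<bar>)" by (simp add: sum_distrib_left mult.commute)
  finally show ?thesis .
qed

lemma m_diff_bound:
  assumes a: "a \<in> cube y0 \<delta>" and b: "b \<in> cube y0 \<delta>" and j: "j \<le> CARD('n)"
  shows "\<bar>mr j b - mr j a\<bar> \<le> kslope_bound * (\<Sum>i\<in>UNIV. \<bar>b$i - a$i\<bar>)"
proof (rule le_of_le_plus_eta[of 1])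
  fix \<eta> :: real assume eta: "0 < \<eta>" "\<eta> \<le> 1"
  obtain w where w: "near_max a j w" "F a w > ereal (mr j a - \<eta>)" using near_max_exists[OF a j eta] by blast
  obtain w' where w': "near_max b j w'" "F b w' > ereal (mr j b - \<eta>)" using near_max_exists[OF b j eta] by blast
  have "mr j b - mr j a > kdiff a b w - \<eta>" by (rule m_diff_lower[OF a w b])
  moreover have "mr j b - mr j a < kdiff a b w' + \<eta>" by (rule m_diff_upper[OF b w' a])
  moreover have "\<bar>kdiff a b w\<bar> \<le> kslope_bound * (\<Sum>i\<in>UNIV. \<bar>b$i - a$i\<bar>)"
    by (rule kdiff_bound[OF a b]) (use w in \<open>auto simp: near_max_pair_def\<close>)
  moreover have "\<bar>kdiff a b w'\<bar> \<le> kslope_bound * (\<Sum>i\<in>UNIV. \<bar>b$i - a$i\<bar>)"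
    by (rule kdiff_bound[OF a b]) (use w' in \<open>auto simp: near_max_pair_def\<close>)
  ultimately show "\<bar>mr j b - mr j a\<bar> - 1 * \<eta> \<le> kslope_bound * (\<Sum>i\<in>UNIV. \<bar>b$i - a$i\<bar>)"
    by (auto simp: abs_le_iff abs_less_iff)
qed simp

lemma Phi_diff_bound:
  assumes a: "a \<in> cube y0 \<delta>" and b: "b \<in> cube y0 \<delta>"
  shows "\<bar>Phi J K b $ k - Phi J K a $ k\<bar> \<le> 2 * kslope_bound * (\<Sum>i\<in>UNIV. \<bar>b$i - a$i\<bar>)"
proof -
  have p: "Suc (idx_pos k) \<le> CARD('n)" "idx_pos k \<le> CARD('n)" using idx_pos_lt[of k] by auto
  have "Phi J K b $ k - Phi J K a $ k = (mr (Suc (idx_pos k)) b - mr (Suc (idx_pos k)) a) - (mr (idx_pos k) b - mr (idx_pos k) a)"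
    unfolding Phi_nth by simp
  then show ?thesis using m_diff_bound[OF a b p(1)] m_diff_bound[OF a b p(2)] by (simp add: abs_le_iff)
qed

lemma Phi_axis_step_offdiag_nonneg:
  assumes a: "a \<in> cube y0 \<delta>" and b: "b \<in> cube y0 \<delta>" and bd: "b = a + h *\<^sub>R axis l (1::real)"
    and h: "h > 0" and kl: "k \<noteq> l"
  shows "Phi J K b $ k - Phi J K a $ k \<ge> 0"
proof -
  have "0 \<le> Phi J K b $ k - Phi J K a $ k"
  proof (rule le_of_le_plus_eta[of "2 * (real CARD('n) + 1)"])
    fix \<eta> :: real assume eta: "0 < \<eta>" "\<eta> \<le> 1"
    define \<tau> where "\<tau> i = (if i = k then 1 else (0::real))" for i
    have tau: "\<bar>\<tau> i\<bar> \<le> 1" for i unfolding \<tau>_def by auto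
    obtain w where w: "\<And>j. j \<le> CARD('n) \<Longrightarrow> near_max_pair a b j (w j)"
      and ineq: "(\<Sum>m<CARD('n). \<tau> (idx_of (Suc m)) * (kdiff a b (w (Suc m)) - kdiff a b (w m))) - 2 * (real CARD('n) + 1) * \<eta>
        \<le> (\<Sum>i\<in>UNIV. \<tau> i * (Phi J K b $ i - Phi J K a $ i))"
      using Phi_diff_weighted_lower[OF a b, of \<tau> \<eta>, OF tau eta] by (elim exE conjE) auto
    have lhs: "(\<Sum>i\<in>UNIV. \<tau> i * (Phi J K b $ i - Phi J K a $ i)) = Phi J K b $ k - Phi J K a $ k"
    proof -
      have "(\<Sum>i\<in>UNIV. \<tau> i * (Phi J K b $ i - Phi J K a $ i)) = (\<Sum>i\<in>UNIV. if i = k then Phi J K b $ i - Phi J K a $ i else 0)"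
        by (rule sum.cong) (auto simp: \<tau>_def)
      then show ?thesis by simp
    qed
    have main: "(\<Sum>m<CARD('n). \<tau> (idx_of (Suc m)) * (kdiff a b (w (Suc m)) - kdiff a b (w m))) =
        kdiff a b (w (Suc (idx_pos k))) - kdiff a b (w (idx_pos k))"
      using sum_indicator_idx_of[of k "\<lambda>m. kdiff a b (w (Suc m)) - kdiff a b (w m)"] unfolding \<tau>_def by simp
    have Gd: "kdiff a b w' - kdiff a b w'' = - h * (kslope a b l w' - kslope a b l w'')" for w' w''
    proof -
      have "kdiff a b w' - kdiff a b w'' = (\<Sum>i\<in>UNIV. if i = l then - h * (kslope a b i w' - kslope a b i w'') else 0)"
        unfolding kdiff_diff by (rule sum.cong) (auto simp: axis_step_diff[OF bd])
      then show ?thesis by simp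
    qed
    have pk: "idx_pos k < CARD('n)" "idx_pos k \<noteq> idx_pos l"
      using idx_pos_lt[of k] kl idx_of_idx_pos[of k] idx_of_idx_pos[of l] by metis+
    have "kslope a b l (w (Suc (idx_pos k))) \<le> kslope a b l (w (idx_pos k))"
      by (rule kslope_antimono[OF a b pk(1) w w pk(2)]) (use pk in auto)
    then have "0 \<le> kdiff a b (w (Suc (idx_pos k))) - kdiff a b (w (idx_pos k))"
      unfolding Gd using h by (simp add: mult_nonneg_nonpos)
    then show "0 - 2 * (real CARD('n) + 1) * \<eta> \<le> Phi J K b $ k - Phi J K a $ k"
      using ineq lhs main by linarith
  qed simp
  then show ?thesis by simp
qed

lemma Phi_axis_step_colsum_le:
  assumes a: "a \<in> cube y0 \<delta>" and b: "b \<in> cube y0 \<delta>" and bd: "b = a + h *\<^sub>R axis l (1::real)"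
    and h: "h > 0"
  shows "(\<Sum>k\<in>UNIV. Phi J K b $ k - Phi J K a $ k) \<le> - kslope_gap * h"
proof -
  have "h * kslope_gap \<le> - (\<Sum>k\<in>UNIV. Phi J K b $ k - Phi J K a $ k)"
  proof (rule le_of_le_plus_eta[of "2 * (real CARD('n) + 1)"])
    fix \<eta> :: real assume eta: "0 < \<eta>" "\<eta> \<le> 1"
    define \<tau> where "\<tau> i = (-1::real)" for i :: 'n
    have tau: "\<bar>\<tau> i\<bar> \<le> 1" for i unfolding \<tau>_def by auto
    obtain w where w: "\<And>j. j \<le> CARD('n) \<Longrightarrow> near_max_pair a b j (w j)"
      and ineq: "(\<Sum>m<CARD('n). \<tau> (idx_of (Suc m)) * (kdiff a b (w (Suc m)) - kdiff a b (w m))) - 2 * (real CARD('n) + 1) * \<eta>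
        \<le> (\<Sum>i\<in>UNIV. \<tau> i * (Phi J K b $ i - Phi J K a $ i))"
      using Phi_diff_weighted_lower[OF a b, of \<tau> \<eta>, OF tau eta] by (elim exE conjE) auto
    have lhs: "(\<Sum>i\<in>UNIV. \<tau> i * (Phi J K b $ i - Phi J K a $ i)) = - (\<Sum>k\<in>UNIV. Phi J K b $ k - Phi J K a $ k)"
      unfolding \<tau>_def by (simp add: sum_subtractf)
    have "(\<Sum>m<CARD('n). \<tau> (idx_of (Suc m)) * (kdiff a b (w (Suc m)) - kdiff a b (w m))) =
        - (\<Sum>m<CARD('n). kdiff a b (w (Suc m)) - kdiff a b (w m))"
      unfolding \<tau>_def by (simp add: sum_subtractf)
    also have "\<dots> = - (kdiff a b (w CARD('n)) - kdiff a b (w 0))" using sum_lessThan_telescope[of "\<lambda>m. kdiff a b (w m)"]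
      by simp
    finally have main: "(\<Sum>m<CARD('n). \<tau> (idx_of (Suc m)) * (kdiff a b (w (Suc m)) - kdiff a b (w m))) =
        - (kdiff a b (w CARD('n)) - kdiff a b (w 0))" .
    have Gd: "kdiff a b w' - kdiff a b w'' = - h * (kslope a b l w' - kslope a b l w'')" for w' w''
    proof -
      have "kdiff a b w' - kdiff a b w'' = (\<Sum>i\<in>UNIV. if i = l then - h * (kslope a b i w' - kslope a b i w'') else 0)"
        unfolding kdiff_diff by (rule sum.cong) (auto simp: axis_step_diff[OF bd])
      then show ?thesis by simp
    qed
    have ne: "a$l \<noteq> b$l" using axis_step_diff[OF bd, of l] h by auto
    have "kslope a b l (w CARD('n)) \<ge> kslope a b l (w 0) + kslope_gap" by (rule kslope_gap_across[OF a b w w ne]) auto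
    then have "h * kslope_gap \<le> h * (kslope a b l (w CARD('n)) - kslope a b l (w 0))" using h by (intro mult_left_mono) auto
    then show "h * kslope_gap - 2 * (real CARD('n) + 1) * \<eta> \<le> - (\<Sum>k\<in>UNIV. Phi J K b $ k - Phi J K a $ k)"
      using ineq lhs main Gd[of "w CARD('n)" "w 0"] by linarith
  qed simp
  then show ?thesis by (simp add: algebra_simps)
qed

lemma jacobian_in_dominant_cone:
  assumes z: "z \<in> cube y0 \<delta>" and d: "Phi J K differentiable (at z)"
  shows "matrix (frechet_derivative (Phi J K) (at z)) \<in> dominant_cone kslope_gap"
proof -
  define D where "D = frechet_derivative (Phi J K) (at z)"
  have hD: "(Phi J K has_derivative D) (at z)" using d frechet_derivative_works D_def by auto
  have mat: "matrix D $ k $ l = D (axis l 1) $ k" for k l by (simp add: matrix_def)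
  have off: "0 \<le> D (axis l 1) $ k" if kl: "k \<noteq> l" for k l
  proof (rule tendsto_lowerbound[OF has_derivative_axis_quotient[OF hD]])
    show "\<forall>\<^sub>F h in at_right 0. 0 \<le> (Phi J K (z + h *\<^sub>R axis l 1) $ k - Phi J K z $ k) / h"
      using axis_step_in_cube[OF z, of l]
    proof (rule eventually_mono)
      fix h assume h: "0 < h \<and> z + h *\<^sub>R axis l 1 \<in> cube y0 \<delta>"
      have "Phi J K (z + h *\<^sub>R axis l 1) $ k - Phi J K z $ k \<ge> 0"
        by (rule Phi_axis_step_offdiag_nonneg[OF z _ refl _ kl]) (use h in auto)
      then show "0 \<le> (Phi J K (z + h *\<^sub>R axis l 1) $ k - Phi J K z $ k) / h" using h by simp
    qed
  qed simp
  have col: "(\<Sum>k\<in>UNIV. D (axis l 1) $ k) \<le> - kslope_gap" for l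
  proof (rule tendsto_upperbound[OF tendsto_sum[OF has_derivative_axis_quotient[OF hD]]])
    show "\<forall>\<^sub>F h in at_right 0. (\<Sum>k\<in>UNIV. (Phi J K (z + h *\<^sub>R axis l 1) $ k - Phi J K z $ k) / h) \<le> - kslope_gap"
      using axis_step_in_cube[OF z, of l]
    proof (rule eventually_mono)
      fix h assume h: "0 < h \<and> z + h *\<^sub>R axis l 1 \<in> cube y0 \<delta>"
      have "(\<Sum>k\<in>UNIV. Phi J K (z + h *\<^sub>R axis l 1) $ k - Phi J K z $ k) \<le> - kslope_gap * h"
        by (rule Phi_axis_step_colsum_le[OF z _ refl]) (use h in auto)
      then have "(\<Sum>k\<in>UNIV. Phi J K (z + h *\<^sub>R axis l 1) $ k - Phi J K z $ k) / h \<le> - kslope_gap"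
        using h by (simp add: divide_le_eq)
      then show "(\<Sum>k\<in>UNIV. (Phi J K (z + h *\<^sub>R axis l 1) $ k - Phi J K z $ k) / h) \<le> - kslope_gap"
        by (simp add: sum_divide_distrib)
    qed
  qed simp
  show ?thesis unfolding D_def[symmetric] dominant_cone_def using off col by (auto simp: mat)
qed

lemma clarke_derivative_full_rank:
  assumes x: "x \<in> cube y0 \<delta>"
  shows "full_rank_set (clarke_derivative (Yset J K) (Phi J K) x)"
proof -
  let ?S = "{A. \<exists>xs r. (\<forall>k. xs k \<in> Yset J K \<and> Phi J K differentiable (at (xs k))) \<and> xs \<longlonglongrightarrow> x \<and>
              strict_mono r \<and> (\<lambda>k. matrix (frechet_derivative (Phi J K) (at (xs (r k))))) \<longlonglongrightarrow> A}"
  have "?S \<subseteq> dominant_cone kslope_gap"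
  proof
    fix A assume "A \<in> ?S"
    then obtain xs r where xs: "\<And>k. xs k \<in> Yset J K \<and> Phi J K differentiable (at (xs k))" "xs \<longlonglongrightarrow> x"
      "strict_mono r" and lim: "(\<lambda>k. matrix (frechet_derivative (Phi J K) (at (xs (r k))))) \<longlonglongrightarrow> A" by blast
    have "(xs \<circ> r) \<longlonglongrightarrow> x" by (rule LIMSEQ_subseq_LIMSEQ[OF xs(2) xs(3)])
    then have ev: "eventually (\<lambda>k. (xs \<circ> r) k \<in> cube y0 \<delta>) sequentially"
      by (rule topological_tendstoD[OF _ open_cube x])
    have "eventually (\<lambda>k. matrix (frechet_derivative (Phi J K) (at (xs (r k)))) \<in> dominant_cone kslope_gap) sequentially"
      using ev by (rule eventually_mono) (use jacobian_in_dominant_cone xs(1) in auto)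
    then show "A \<in> dominant_cone kslope_gap" by (rule Lim_in_closed_set[OF closed_dominant_cone _ _ lim]) simp
  qed
  then have "clarke_derivative (Yset J K) (Phi J K) x \<subseteq> dominant_cone kslope_gap"
    unfolding clarke_derivative_def by (rule hull_minimal) (rule convex_dominant_cone)
  then show ?thesis unfolding full_rank_set_def using rank_dominant_cone kslope_gap_pos by blast
qed

lemma cube_subset_Yset: "cube y0 \<delta> \<subseteq> Yset J K"
proof
  fix x assume "x \<in> cube y0 \<delta>"
  then show "x \<in> Yset J K" using cube_ok[of x] unfolding Yset_def by auto
qed

lemma clarke_full_rank_nbhd:
  "\<exists>d>0. {x. \<forall>i. \<bar>x $ i - y0 $ i\<bar> < d} \<subseteq> Yset J K \<and>
     (\<forall>x. (\<forall>i. \<bar>x $ i - y0 $ i\<bar> < d) \<longrightarrow> full_rank_set (clarke_derivative (Yset J K) (Phi J K) x))"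
  using const(1) cube_subset_Yset clarke_derivative_full_rank unfolding cube_def by blast

lemma Phi_lipschitz:
  assumes a: "a \<in> cube y0 \<delta>" and b: "b \<in> cube y0 \<delta>"
  shows "dist (Phi J K a) (Phi J K b) \<le> (2 * kslope_bound * real CARD('n) * real CARD('n)) * dist a b"
proof -
  let ?n = "real CARD('n)"
  have "dist (Phi J K a) (Phi J K b) = norm (Phi J K b - Phi J K a)" by (simp add: dist_norm norm_minus_commute)
  also have "\<dots> \<le> (\<Sum>k\<in>UNIV. \<bar>(Phi J K b - Phi J K a) $ k\<bar>)" by (rule norm_le_l1_cart)
  also have "\<dots> \<le> (\<Sum>k\<in>(UNIV::'n set). 2 * kslope_bound * (\<Sum>i\<in>UNIV. \<bar>b$i - a$i\<bar>))"
    by (rule sum_mono) (use Phi_diff_bound[OF a b] in simp)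
  also have "\<dots> = ?n * (2 * kslope_bound) * (\<Sum>i\<in>UNIV. \<bar>(b - a)$i\<bar>)" by simp
  also have "\<dots> \<le> ?n * (2 * kslope_bound) * (?n * norm (b - a))"
    by (rule mult_left_mono[OF sum_abs_le_card_norm]) (use kslope_bound_nonneg in auto)
  also have "\<dots> = (2 * kslope_bound * ?n * ?n) * dist a b" by (simp add: dist_norm norm_minus_commute)
  finally show ?thesis .
qed

lemma Phi_inverse_lipschitz:
  assumes a: "a \<in> cube y0 \<delta>" and b: "b \<in> cube y0 \<delta>"
  shows "dist a b \<le> (real CARD('n) / kslope_gap) * dist (Phi J K a) (Phi J K b)"
proof -
  let ?n = "real CARD('n)"
  have "kslope_gap * dist a b \<le> kslope_gap * (\<Sum>i\<in>UNIV. \<bar>b$i - a$i\<bar>)"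
  proof -
    have "dist a b = norm (b - a)" by (simp add: dist_norm norm_minus_commute)
    also have "\<dots> \<le> (\<Sum>i\<in>UNIV. \<bar>(b - a) $ i\<bar>)" by (rule norm_le_l1_cart)
    finally show ?thesis using kslope_gap_pos by (intro mult_left_mono) auto
  qed
  also have "\<dots> \<le> (\<Sum>i\<in>UNIV. \<bar>Phi J K b $ i - Phi J K a $ i\<bar>)" by (rule Phi_diff_l1_lower[OF a b])
  also have "\<dots> = (\<Sum>i\<in>UNIV. \<bar>(Phi J K b - Phi J K a) $ i\<bar>)" by simp
  also have "\<dots> \<le> ?n * norm (Phi J K b - Phi J K a)" by (rule sum_abs_le_card_norm)
  also have "\<dots> = ?n * dist (Phi J K a) (Phi J K b)" by (simp add: dist_norm norm_minus_commute)
  finally have "kslope_gap * dist a b \<le> ?n * dist (Phi J K a) (Phi J K b)" .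
  then show ?thesis using kslope_gap_pos by (simp add: field_simps)
qed

lemma Phi_local_homeomorphism:
  "\<exists>U V g L. open U \<and> y0 \<in> U \<and> U \<subseteq> Yset J K \<and> open V \<and>
            homeomorphism U V (Phi J K) g \<and> L > 0 \<and>
            (\<forall>a\<in>U. \<forall>b\<in>U. dist a b \<le> L * dist (Phi J K a) (Phi J K b) \<and>
                           dist (Phi J K a) (Phi J K b) \<le> L * dist a b)"
proof -
  let ?n = "real CARD('n)"
  define L where "L = max 1 (max (2 * kslope_bound * ?n * ?n) (?n / kslope_gap))"
  have L: "L > 0" unfolding L_def by simp
  have bi: "dist a b \<le> L * dist (Phi J K a) (Phi J K b) \<and> dist (Phi J K a) (Phi J K b) \<le> L * dist a b"
    if "a \<in> cube y0 \<delta>" "b \<in> cube y0 \<delta>" for a b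
  proof
    have "dist a b \<le> (?n / kslope_gap) * dist (Phi J K a) (Phi J K b)" by (rule Phi_inverse_lipschitz[OF that])
    also have "\<dots> \<le> L * dist (Phi J K a) (Phi J K b)" unfolding L_def by (intro mult_right_mono) auto
    finally show "dist a b \<le> L * dist (Phi J K a) (Phi J K b)" .
    have "dist (Phi J K a) (Phi J K b) \<le> (2 * kslope_bound * ?n * ?n) * dist a b" by (rule Phi_lipschitz[OF that])
    also have "\<dots> \<le> L * dist a b" unfolding L_def by (intro mult_right_mono) auto
    finally show "dist (Phi J K a) (Phi J K b) \<le> L * dist a b" .
  qed
  have "y0 \<in> cube y0 \<delta>" unfolding cube_def using const by simp
  moreover have "open (Phi J K ` cube y0 \<delta>) \<and> homeomorphism (cube y0 \<delta>) (Phi J K ` cube y0 \<delta>) (Phi J K)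
      (inv_into (cube y0 \<delta>) (Phi J K))"
    by (rule bi_lipschitz_open_homeomorphism[OF open_cube L bi])
  ultimately show ?thesis using open_cube cube_subset_Yset L bi
    by (intro exI[of _ "cube y0 \<delta>"] exI[of _ "Phi J K ` cube y0 \<delta>"]
        exI[of _ "inv_into (cube y0 \<delta>) (Phi J K)"] exI[of _ L]) auto
qed

end

theorem lemma7p4:
  fixes K :: "'n::{finite,linorder} \<Rightarrow> real \<Rightarrow> ereal"
    and J :: "real \<Rightarrow> ereal"
  assumes kern: "\<And>i. kernel_function (K i)"
    and sing: "\<And>i. singular_kernel (K i)"
    and strict: "\<And>i. strictly_concave_kernel (K i)"
    and pm0: "\<And>i. PM0 (K i)"
    and nfield: "n_field_function CARD('n) J"
    and bdry: "(J 0 = -\<infinity> \<and> (J \<longlongrightarrow> -\<infinity>) (at_right 0)) \<or>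
               (J 1 = -\<infinity> \<and> (J \<longlongrightarrow> -\<infinity>) (at_left 1))"
  shows "(\<forall>y\<in>Yset J K. \<exists>\<delta>>0.
            {x. \<forall>i. \<bar>x $ i - y $ i\<bar> < \<delta>} \<subseteq> Yset J K \<and>
            (\<forall>x. (\<forall>i. \<bar>x $ i - y $ i\<bar> < \<delta>) \<longrightarrow>
                 full_rank_set (clarke_derivative (Yset J K) (Phi J K) x)))
       \<and> (\<forall>y\<in>Yset J K. \<exists>U V g L. open U \<and> y \<in> U \<and> U \<subseteq> Yset J K \<and> open V \<and>
            homeomorphism U V (Phi J K) g \<and> L > 0 \<and>
            (\<forall>a\<in>U. \<forall>b\<in>U. dist a b \<le> L * dist (Phi J K a) (Phi J K b) \<and>
                           dist (Phi J K a) (Phi J K b) \<le> L * dist a b))"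
proof -
  interpret kernel_system K J using assms by unfold_locales
  {
    fix y assume "y \<in> Yset J K"
    then obtain \<delta> \<mu> \<mu>' where "local_estimates K J y \<delta> \<mu> \<mu>'" using exists_local_estimates by blast
    then interpret local_estimates K J y \<delta> \<mu> \<mu>' .
    note clarke_full_rank_nbhd Phi_local_homeomorphism
  }
  then show ?thesis by blast
qed

end
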